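(* Let $R$ be a finitely generated algebra over an algebraically closed field, and let $S$ be a nonzero $R$-algebra that is free as an $R$-module. Suppose that $S/\mathfrak{m}S$ is a domain for every maximal ideal $\mathfrak{m}$ of $R$. Then $R \to S$ has the stable prime extension property.
   Context: All rings are commutative with identity. $R \to S$ has the prime extension property if for every prime ideal $P$ of $R$, $PS$ is prime in $S$ or $PS = S$; it has the stable prime extension property if for every $n \ge 0$, $R[X_1,\dots,X_n] \to S[X_1,\dots,X_n]$ has the prime extension property. *)

theory Defs
  imports Main "HOL-Library.Poly_Mapping" "HOL-Computational_Algebra.Polynomial"
begin

definition is_ring_hom :: "('a::comm_ring_1 \<Rightarrow> 'b::comm_ring_1) \<Rightarrow> bool" where
  "is_ring_hom h \<longleftrightarrow> h 1 = 1 \<and> (\<forall>x y. h (x + y) = h x + h y) \<and> (\<forall>x y. h (x * y) = h x * h y)"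

definition alg_closed_field :: "'k::field itself \<Rightarrow> bool" where
  "alg_closed_field _ \<longleftrightarrow> (\<forall>p :: 'k poly. 0 < degree p \<longrightarrow> (\<exists>x. poly p x = 0))"

inductive_set gen_subring :: "'a::comm_ring_1 set \<Rightarrow> 'a set" for X where
  base: "x \<in> X \<Longrightarrow> x \<in> gen_subring X"
| one: "1 \<in> gen_subring X"
| add: "x \<in> gen_subring X \<Longrightarrow> y \<in> gen_subring X \<Longrightarrow> x + y \<in> gen_subring X"
| neg: "x \<in> gen_subring X \<Longrightarrow> - x \<in> gen_subring X"
| mult: "x \<in> gen_subring X \<Longrightarrow> y \<in> gen_subring X \<Longrightarrow> x * y \<in> gen_subring X"

definition finitely_generated_algebra :: "('k::field \<Rightarrow> 'r::comm_ring_1) \<Rightarrow> bool" where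
  "finitely_generated_algebra phi \<longleftrightarrow>
     (\<exists>G. finite G \<and> gen_subring (range phi \<union> G) = UNIV)"

definition free_module_via :: "('r::comm_ring_1 \<Rightarrow> 's::comm_ring_1) \<Rightarrow> bool" where
  "free_module_via f \<longleftrightarrow> (\<exists>B. \<forall>s. \<exists>!c :: 's \<Rightarrow> 'r.
      (\<forall>b. b \<notin> B \<longrightarrow> c b = 0) \<and> finite {b. c b \<noteq> 0} \<and>
      s = (\<Sum>b\<in>{b. c b \<noteq> 0}. f (c b) * b))"

(* ideals of a ring whose carrier is the subring A of an ambient commutative ring *)
definition ideal_in :: "'a::comm_ring_1 set \<Rightarrow> 'a set \<Rightarrow> bool" where
  "ideal_in A I \<longleftrightarrow> I \<subseteq> A \<and> 0 \<in> I \<and> (\<forall>x\<in>I. \<forall>y\<in>I. x + y \<in> I) \<and> (\<forall>a\<in>A. \<forall>x\<in>I. a * x \<in> I)"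

definition prime_ideal_in :: "'a::comm_ring_1 set \<Rightarrow> 'a set \<Rightarrow> bool" where
  "prime_ideal_in A P \<longleftrightarrow> ideal_in A P \<and> P \<noteq> A \<and>
     (\<forall>a\<in>A. \<forall>b\<in>A. a * b \<in> P \<longrightarrow> a \<in> P \<or> b \<in> P)"

definition maximal_ideal_in :: "'a::comm_ring_1 set \<Rightarrow> 'a set \<Rightarrow> bool" where
  "maximal_ideal_in A M \<longleftrightarrow> ideal_in A M \<and> M \<noteq> A \<and>
     (\<forall>J. ideal_in A J \<and> M \<subseteq> J \<longrightarrow> J = M \<or> J = A)"

definition ideal_gen_in :: "'a::comm_ring_1 set \<Rightarrow> 'a set \<Rightarrow> 'a set" where
  "ideal_gen_in A X = A \<inter> \<Inter>{I. ideal_in A I \<and> X \<subseteq> I}"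

definition quotient_is_domain :: "'a::comm_ring_1 set \<Rightarrow> 'a set \<Rightarrow> bool" where
  "quotient_is_domain A I \<longleftrightarrow> I \<noteq> A \<and> (\<forall>a\<in>A. \<forall>b\<in>A. a * b \<in> I \<longrightarrow> a \<in> I \<or> b \<in> I)"

definition prime_extension_property :: "'a::comm_ring_1 set \<Rightarrow> 'b::comm_ring_1 set \<Rightarrow> ('a \<Rightarrow> 'b) \<Rightarrow> bool" where
  "prime_extension_property A B h \<longleftrightarrow>
     (\<forall>P. prime_ideal_in A P \<longrightarrow>
        prime_ideal_in B (ideal_gen_in B (h ` P)) \<or> ideal_gen_in B (h ` P) = B)"

(* R[X_0,...,X_{n-1}] inside the polynomial ring in countably many variables:
   polynomials all of whose monomials only involve variables with index < n *)
definition polys_in :: "nat \<Rightarrow> ((nat \<Rightarrow>\<^sub>0 nat) \<Rightarrow>\<^sub>0 'a::comm_ring_1) set" where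
  "polys_in n = {p. \<forall>m\<in>Poly_Mapping.keys p. \<forall>i\<in>Poly_Mapping.keys (m :: nat \<Rightarrow>\<^sub>0 nat). i < n}"

definition stable_prime_extension_property :: "('r::comm_ring_1 \<Rightarrow> 's::comm_ring_1) \<Rightarrow> bool" where
  "stable_prime_extension_property f \<longleftrightarrow>
     (\<forall>n. prime_extension_property (polys_in n) (polys_in n) (Poly_Mapping.map f))"

end

theory Submission
  imports Defs "Jordan_Normal_Form.Char_Poly"
begin

text \<open>Write \<open>R[X]\<close> and \<open>S[X]\<close> for the polynomial rings in \<open>n\<close> variables. A basis of \<open>S\<close> over \<open>R\<close>
  is also a basis of \<open>S[X]\<close> over \<open>R[X]\<close>, so every element of \<open>S[X]\<close> has coordinates in \<open>R[X]\<close>, and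
  it lies in the extension \<open>P S[X]\<close> of a prime \<open>P\<close> iff all its coordinates lie in \<open>P\<close>.
  Suppose \<open>a b \<in> P S[X]\<close> but \<open>a, b \<notin> P S[X]\<close>, and pick coordinates \<open>a\<^sub>1, b\<^sub>1 \<notin> P\<close>.
  Since \<open>R[X]/P\<close> is a finitely generated algebra over the algebraically closed field \<open>k\<close>, the weak
  Nullstellensatz yields a \<open>k\<close>-point \<open>\<chi>\<close> of \<open>R[X]/P\<close> with \<open>\<chi>(a\<^sub>1 b\<^sub>1) \<noteq> 0\<close>. Such a point is
  evaluation at some \<open>z \<in> R\<^sup>n\<close> followed by reduction modulo a maximal ideal \<open>m\<close> of \<open>R\<close>. Evaluation
  at \<open>z\<close> maps \<open>P S[X]\<close> into \<open>m S\<close>, which is prime by hypothesis, so \<open>a(z)\<close> or \<open>b(z)\<close> lies in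
  \<open>m S\<close>; comparing coordinates, \<open>\<chi>\<close> kills \<open>a\<^sub>1\<close> or \<open>b\<^sub>1\<close>, a contradiction.

  The Nullstellensatz is proved by adjoining the generators one at a time and extending \<open>k\<close>-points:
  if the new generator is transcendental modulo the prime, any value avoiding finitely many roots
  works; otherwise a root of the image of a minimal relation does, by a determinant trick.\<close>

section \<open>Subrings, ideals and partial homomorphisms\<close>

definition is_subring :: "'a::comm_ring_1 set \<Rightarrow> bool" where
  "is_subring A \<longleftrightarrow> 1 \<in> A \<and> (\<forall>x\<in>A. \<forall>y\<in>A. x + y \<in> A) \<and> (\<forall>x\<in>A. \<forall>y\<in>A. x * y \<in> A) \<and> (\<forall>x\<in>A. - x \<in> A)"

lemma subringD:
  assumes "is_subring A"
  shows "1 \<in> A" "0 \<in> A" "x \<in> A \<Longrightarrow> y \<in> A \<Longrightarrow> x + y \<in> A" "x \<in> A \<Longrightarrow> y \<in> A \<Longrightarrow> x * y \<in> A"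
    "x \<in> A \<Longrightarrow> - x \<in> A" "x \<in> A \<Longrightarrow> y \<in> A \<Longrightarrow> x - y \<in> A"
proof -
  show 1: "1 \<in> A" using assms unfolding is_subring_def by auto
  have "-1 \<in> A" using assms 1 unfolding is_subring_def by auto
  then have "1 + -1 \<in> A" using assms 1 unfolding is_subring_def by blast
  then show "0 \<in> A" by simp
  show "x \<in> A \<Longrightarrow> y \<in> A \<Longrightarrow> x + y \<in> A" "x \<in> A \<Longrightarrow> y \<in> A \<Longrightarrow> x * y \<in> A"
    "x \<in> A \<Longrightarrow> - x \<in> A" using assms unfolding is_subring_def by auto
  show "x \<in> A \<Longrightarrow> y \<in> A \<Longrightarrow> x - y \<in> A" using assms unfolding is_subring_def
    by (metis diff_conv_add_uminus)
qed

lemma subring_sum: "is_subring A \<Longrightarrow> (\<And>i. i \<in> F \<Longrightarrow> g i \<in> A) \<Longrightarrow> sum g F \<in> A"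
  by (induction F rule: infinite_finite_induct) (auto simp: subringD)

lemma subring_prod: "is_subring A \<Longrightarrow> (\<And>i. i \<in> F \<Longrightarrow> g i \<in> A) \<Longrightarrow> prod g F \<in> A"
  by (induction F rule: infinite_finite_induct) (auto simp: subringD)

lemma subring_power: "is_subring A \<Longrightarrow> x \<in> A \<Longrightarrow> x ^ n \<in> A"
  by (induction n) (auto simp: subringD)

lemma is_subring_gen_subring: "is_subring (gen_subring X)"
  unfolding is_subring_def by (auto intro: gen_subring.intros)

lemma gen_subring_base: "X \<subseteq> gen_subring X"
  by (auto intro: gen_subring.base)

lemma gen_subring_least: "is_subring A \<Longrightarrow> X \<subseteq> A \<Longrightarrow> gen_subring X \<subseteq> A"
proof
  fix x assume a: "is_subring A" "X \<subseteq> A" and x: "x \<in> gen_subring X"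
  from x show "x \<in> A" by (induction rule: gen_subring.induct) (use a in \<open>auto simp: subringD\<close>)
qed

lemma gen_subring_mono: "X \<subseteq> Y \<Longrightarrow> gen_subring X \<subseteq> gen_subring Y"
  by (meson gen_subring_base gen_subring_least order_trans is_subring_gen_subring)

definition hom_on :: "'a::comm_ring_1 set \<Rightarrow> ('a \<Rightarrow> 'b::comm_ring_1) \<Rightarrow> bool" where
  "hom_on A \<chi> \<longleftrightarrow> \<chi> 1 = 1 \<and> (\<forall>x\<in>A. \<forall>y\<in>A. \<chi> (x + y) = \<chi> x + \<chi> y \<and> \<chi> (x * y) = \<chi> x * \<chi> y)"

lemma hom_onD:
  assumes "hom_on A \<chi>" "is_subring A"
  shows "\<chi> 1 = 1" "\<chi> 0 = 0" "x \<in> A \<Longrightarrow> y \<in> A \<Longrightarrow> \<chi> (x + y) = \<chi> x + \<chi> y"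
    "x \<in> A \<Longrightarrow> y \<in> A \<Longrightarrow> \<chi> (x * y) = \<chi> x * \<chi> y"
    "x \<in> A \<Longrightarrow> \<chi> (- x) = - \<chi> x" "x \<in> A \<Longrightarrow> y \<in> A \<Longrightarrow> \<chi> (x - y) = \<chi> x - \<chi> y"
proof -
  have a: "\<And>x y. x \<in> A \<Longrightarrow> y \<in> A \<Longrightarrow> \<chi> (x + y) = \<chi> x + \<chi> y"
    "\<And>x y. x \<in> A \<Longrightarrow> y \<in> A \<Longrightarrow> \<chi> (x * y) = \<chi> x * \<chi> y" using assms unfolding hom_on_def by auto
  show "\<chi> 1 = 1" using assms unfolding hom_on_def by auto
  have 0: "0 \<in> A" using assms(2) by (simp add: subringD)
  have "\<chi> (0 + 0) = \<chi> 0 + \<chi> 0" using a 0 by blast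
  then show z: "\<chi> 0 = 0" by simp
  have n: "\<And>x. x \<in> A \<Longrightarrow> \<chi> (- x) = - \<chi> x"
  proof -
    fix x assume x: "x \<in> A"
    then have "-x \<in> A" using assms(2) by (simp add: subringD)
    then have "\<chi> (x + - x) = \<chi> x + \<chi> (-x)" by (rule a(1)[OF x])
    then show "\<chi> (- x) = - \<chi> x" using z by (simp add: eq_neg_iff_add_eq_0 add.commute)
  qed
  show "x \<in> A \<Longrightarrow> y \<in> A \<Longrightarrow> \<chi> (x + y) = \<chi> x + \<chi> y"
    "x \<in> A \<Longrightarrow> y \<in> A \<Longrightarrow> \<chi> (x * y) = \<chi> x * \<chi> y" "x \<in> A \<Longrightarrow> \<chi> (- x) = - \<chi> x"
    using a n by auto
  show "x \<in> A \<Longrightarrow> y \<in> A \<Longrightarrow> \<chi> (x - y) = \<chi> x - \<chi> y"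
    using a(1)[of x "-y"] n[of y] assms(2) by (simp add: subringD)
qed

lemma hom_on_sum: "hom_on A \<chi> \<Longrightarrow> is_subring A \<Longrightarrow> (\<And>i. i \<in> F \<Longrightarrow> g i \<in> A) \<Longrightarrow> \<chi> (sum g F) = (\<Sum>i\<in>F. \<chi> (g i))"
  by (induction F rule: infinite_finite_induct) (auto simp: hom_onD subring_sum)

lemma hom_on_prod: "hom_on A \<chi> \<Longrightarrow> is_subring A \<Longrightarrow> (\<And>i. i \<in> F \<Longrightarrow> g i \<in> A) \<Longrightarrow> \<chi> (prod g F) = (\<Prod>i\<in>F. \<chi> (g i))"
  by (induction F rule: infinite_finite_induct) (auto simp: hom_onD subring_prod)

lemma hom_on_power: "hom_on A \<chi> \<Longrightarrow> is_subring A \<Longrightarrow> x \<in> A \<Longrightarrow> \<chi> (x ^ n) = \<chi> x ^ n"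
  by (induction n) (auto simp: hom_onD subring_power)

lemma ring_homD:
  assumes "is_ring_hom h"
  shows "h 1 = 1" "h 0 = 0" "h (x + y) = h x + h y" "h (x * y) = h x * h y" "h (- x) = - h x"
    "h (x - y) = h x - h y" "h (x ^ n) = h x ^ n" "h (sum g F) = (\<Sum>i\<in>F. h (g i))"
    "h (prod g F) = (\<Prod>i\<in>F. h (g i))"
proof -
  have hom: "hom_on UNIV h" using assms unfolding is_ring_hom_def hom_on_def by auto
  have s: "is_subring (UNIV::'a set)" unfolding is_subring_def by auto
  show "h 1 = 1" "h 0 = 0" "h (x + y) = h x + h y" "h (x * y) = h x * h y" "h (- x) = - h x"
    "h (x - y) = h x - h y" using hom_onD[OF hom s] by auto
  show "h (x ^ n) = h x ^ n" using hom_on_power[OF hom s] by auto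
  show "h (sum g F) = (\<Sum>i\<in>F. h (g i))" using hom_on_sum[OF hom s] by auto
  show "h (prod g F) = (\<Prod>i\<in>F. h (g i))" using hom_on_prod[OF hom s] by auto
qed

lemma ideal_inD:
  assumes "ideal_in A I" "is_subring A"
  shows "I \<subseteq> A" "0 \<in> I" "x \<in> I \<Longrightarrow> y \<in> I \<Longrightarrow> x + y \<in> I" "a \<in> A \<Longrightarrow> x \<in> I \<Longrightarrow> a * x \<in> I"
    "a \<in> A \<Longrightarrow> x \<in> I \<Longrightarrow> x * a \<in> I" "x \<in> I \<Longrightarrow> - x \<in> I" "x \<in> I \<Longrightarrow> y \<in> I \<Longrightarrow> x - y \<in> I"
proof -
  have m: "\<And>a x. a \<in> A \<Longrightarrow> x \<in> I \<Longrightarrow> a * x \<in> I" using assms(1) unfolding ideal_in_def by auto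
  have n: "\<And>x. x \<in> I \<Longrightarrow> - x \<in> I" using m[of "-1"] assms(2) by (auto simp: subringD)
  show "I \<subseteq> A" "0 \<in> I" "x \<in> I \<Longrightarrow> y \<in> I \<Longrightarrow> x + y \<in> I" "a \<in> A \<Longrightarrow> x \<in> I \<Longrightarrow> a * x \<in> I"
    "a \<in> A \<Longrightarrow> x \<in> I \<Longrightarrow> x * a \<in> I" "x \<in> I \<Longrightarrow> - x \<in> I"
    using assms(1) m n unfolding ideal_in_def by (auto simp: mult.commute)
  show "x \<in> I \<Longrightarrow> y \<in> I \<Longrightarrow> x - y \<in> I" using n[of y] assms(1) unfolding ideal_in_def
    by (metis diff_conv_add_uminus)
qed

lemma ideal_in_sum: "ideal_in A I \<Longrightarrow> is_subring A \<Longrightarrow> (\<And>i. i \<in> F \<Longrightarrow> g i \<in> I) \<Longrightarrow> sum g F \<in> I"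
  by (induction F rule: infinite_finite_induct) (auto simp: ideal_inD)

lemma ideal_gen_ideal: assumes "is_subring A" "X \<subseteq> A" shows "ideal_in A (ideal_gen_in A X)"
  unfolding ideal_in_def ideal_gen_in_def using assms
  by (auto simp: subringD ideal_inD)

lemma ideal_gen_base: "X \<subseteq> A \<Longrightarrow> X \<subseteq> ideal_gen_in A X"
  unfolding ideal_gen_in_def by auto

lemma ideal_gen_least: "ideal_in A I \<Longrightarrow> X \<subseteq> I \<Longrightarrow> ideal_gen_in A X \<subseteq> I"
  unfolding ideal_gen_in_def by auto

lemma prime_idealD:
  assumes "prime_ideal_in A P"
  shows "ideal_in A P" "1 \<notin> P" "a \<in> A \<Longrightarrow> b \<in> A \<Longrightarrow> a * b \<in> P \<Longrightarrow> a \<in> P \<or> b \<in> P"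
    "is_subring A \<Longrightarrow> a \<in> A \<Longrightarrow> b \<in> A \<Longrightarrow> a \<notin> P \<Longrightarrow> b \<notin> P \<Longrightarrow> a * b \<notin> P"
proof -
  show i: "ideal_in A P" using assms unfolding prime_ideal_in_def by auto
  show "a \<in> A \<Longrightarrow> b \<in> A \<Longrightarrow> a * b \<in> P \<Longrightarrow> a \<in> P \<or> b \<in> P"
    "is_subring A \<Longrightarrow> a \<in> A \<Longrightarrow> b \<in> A \<Longrightarrow> a \<notin> P \<Longrightarrow> b \<notin> P \<Longrightarrow> a * b \<notin> P"
    using assms unfolding prime_ideal_in_def by auto
  show "1 \<notin> P"
  proof
    assume "1 \<in> P"
    then have "\<forall>a\<in>A. a * 1 \<in> P" using i unfolding ideal_in_def by blast
    then have "A \<subseteq> P" by auto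
    then show False using assms i unfolding prime_ideal_in_def ideal_in_def by auto
  qed
qed

section \<open>Multivariate polynomials\<close>

abbreviation mvar :: "nat \<Rightarrow> (nat \<Rightarrow>\<^sub>0 nat) \<Rightarrow>\<^sub>0 'a::comm_ring_1" where
  "mvar i \<equiv> Poly_Mapping.single (Poly_Mapping.single i 1) 1"

lemma keys_add_nat: "Poly_Mapping.keys ((a::nat \<Rightarrow>\<^sub>0 nat) + b) = Poly_Mapping.keys a \<union> Poly_Mapping.keys b"
  by (auto simp: in_keys_iff lookup_add)

lemma is_subring_polys_in: "is_subring (polys_in n :: ((nat \<Rightarrow>\<^sub>0 nat) \<Rightarrow>\<^sub>0 'a::comm_ring_1) set)"
proof -
  have add: "p + q \<in> polys_in n" if "p \<in> polys_in n" "q \<in> polys_in n" for p q :: "(nat \<Rightarrow>\<^sub>0 nat) \<Rightarrow>\<^sub>0 'a"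
    using that keys_add[of p q] unfolding polys_in_def by blast
  have mult: "p * q \<in> polys_in n" if "p \<in> polys_in n" "q \<in> polys_in n" for p q :: "(nat \<Rightarrow>\<^sub>0 nat) \<Rightarrow>\<^sub>0 'a"
  proof -
    have "\<forall>m\<in>Poly_Mapping.keys (p * q). \<forall>i\<in>Poly_Mapping.keys m. i < n"
    proof (intro ballI)
      fix m i assume m: "m \<in> Poly_Mapping.keys (p * q)" and i: "i \<in> Poly_Mapping.keys m"
      from keys_mult[of p q] m obtain a b where "m = a + b" "a \<in> Poly_Mapping.keys p" "b \<in> Poly_Mapping.keys q" by blast
      then show "i < n" using i that keys_add_nat[of a b] unfolding polys_in_def by auto
    qed
    then show ?thesis unfolding polys_in_def by simp
  qed
  have neg: "- p \<in> polys_in n" if "p \<in> polys_in n" for p :: "(nat \<Rightarrow>\<^sub>0 nat) \<Rightarrow>\<^sub>0 'a"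
  proof -
    have "Poly_Mapping.keys (- p) = Poly_Mapping.keys p" by (auto simp: in_keys_iff)
    then show ?thesis using that unfolding polys_in_def by simp
  qed
  have one: "(1::(nat \<Rightarrow>\<^sub>0 nat) \<Rightarrow>\<^sub>0 'a) \<in> polys_in n" unfolding polys_in_def by simp
  show ?thesis unfolding is_subring_def using add mult neg one by blast
qed

lemma single0_in_polys_in: "Poly_Mapping.single 0 c \<in> polys_in n"
  unfolding polys_in_def by simp

lemma mvar_in_polys_in: "i < n \<Longrightarrow> mvar i \<in> polys_in n"
  unfolding polys_in_def by simp

lemma poly_mapping_sum_single: "p = (\<Sum>\<mu>\<in>Poly_Mapping.keys p. Poly_Mapping.single \<mu> (Poly_Mapping.lookup p \<mu>))"
  by (rule poly_mapping_eqI) (auto simp: lookup_sum lookup_single when_def in_keys_iff)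

lemma mvar_power: "(mvar i :: (nat \<Rightarrow>\<^sub>0 nat) \<Rightarrow>\<^sub>0 'a::comm_ring_1) ^ k = Poly_Mapping.single (Poly_Mapping.single i k) 1"
proof (induction k)
  case (Suc k) then show ?case by (simp add: mult_single single_add[symmetric] mult.commute)
qed simp

lemma prod_single_one: "(\<Prod>i\<in>F. Poly_Mapping.single (g i) (1::'a::comm_ring_1)) = Poly_Mapping.single (\<Sum>i\<in>F. g i) 1"
  by (induction F rule: infinite_finite_induct) (auto simp: mult_single)

lemma single_eq_const_mult_vars:
  "(Poly_Mapping.single \<mu> c :: (nat \<Rightarrow>\<^sub>0 nat) \<Rightarrow>\<^sub>0 'a::comm_ring_1) =
     Poly_Mapping.single 0 c * (\<Prod>i\<in>Poly_Mapping.keys \<mu>. mvar i ^ Poly_Mapping.lookup \<mu> i)"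
proof -
  have "(\<Prod>i\<in>Poly_Mapping.keys \<mu>. (mvar i :: (nat \<Rightarrow>\<^sub>0 nat) \<Rightarrow>\<^sub>0 'a) ^ Poly_Mapping.lookup \<mu> i) =
        Poly_Mapping.single (\<Sum>i\<in>Poly_Mapping.keys \<mu>. Poly_Mapping.single i (Poly_Mapping.lookup \<mu> i)) 1"
    unfolding mvar_power prod_single_one by simp
  also have "(\<Sum>i\<in>Poly_Mapping.keys \<mu>. Poly_Mapping.single i (Poly_Mapping.lookup \<mu> i)) = \<mu>"
    by (rule poly_mapping_sum_single[symmetric])
  finally show ?thesis by (simp add: mult_single)
qed

definition eval_monomial :: "(nat \<Rightarrow> 'a::comm_ring_1) \<Rightarrow> (nat \<Rightarrow>\<^sub>0 nat) \<Rightarrow> 'a" where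
  "eval_monomial z \<mu> = (\<Prod>i\<in>Poly_Mapping.keys \<mu>. z i ^ Poly_Mapping.lookup \<mu> i)"

definition eval_mpoly :: "(nat \<Rightarrow> 'a::comm_ring_1) \<Rightarrow> ((nat \<Rightarrow>\<^sub>0 nat) \<Rightarrow>\<^sub>0 'a) \<Rightarrow> 'a" where
  "eval_mpoly z p = (\<Sum>\<mu>\<in>Poly_Mapping.keys p. Poly_Mapping.lookup p \<mu> * eval_monomial z \<mu>)"

lemma eval_monomial_superset: "finite F \<Longrightarrow> Poly_Mapping.keys \<mu> \<subseteq> F \<Longrightarrow> eval_monomial z \<mu> = (\<Prod>i\<in>F. z i ^ Poly_Mapping.lookup \<mu> i)"
  unfolding eval_monomial_def by (rule prod.mono_neutral_left) (auto simp: in_keys_iff)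

lemma eval_monomial_add: "eval_monomial z (\<mu> + \<nu>) = eval_monomial z \<mu> * eval_monomial z \<nu>"
proof -
  let ?F = "Poly_Mapping.keys \<mu> \<union> Poly_Mapping.keys \<nu>"
  have "eval_monomial z (\<mu> + \<nu>) = (\<Prod>i\<in>?F. z i ^ Poly_Mapping.lookup (\<mu> + \<nu>) i)"
    by (rule eval_monomial_superset) (auto simp: keys_add_nat)
  also have "\<dots> = (\<Prod>i\<in>?F. z i ^ Poly_Mapping.lookup \<mu> i) * (\<Prod>i\<in>?F. z i ^ Poly_Mapping.lookup \<nu> i)"
    by (simp add: lookup_add power_add prod.distrib)
  also have "\<dots> = eval_monomial z \<mu> * eval_monomial z \<nu>"
    by (subst (1 2) eval_monomial_superset[of ?F]) auto
  finally show ?thesis .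
qed

lemma eval_monomial_zero[simp]: "eval_monomial z 0 = 1"
  unfolding eval_monomial_def by simp

lemma eval_mpoly_superset: "finite F \<Longrightarrow> Poly_Mapping.keys p \<subseteq> F \<Longrightarrow> eval_mpoly z p = (\<Sum>\<mu>\<in>F. Poly_Mapping.lookup p \<mu> * eval_monomial z \<mu>)"
  unfolding eval_mpoly_def by (rule sum.mono_neutral_left) (auto simp: in_keys_iff)

lemma eval_mpoly_add: "eval_mpoly z (p + q) = eval_mpoly z p + eval_mpoly z q"
proof -
  let ?F = "Poly_Mapping.keys p \<union> Poly_Mapping.keys q"
  have "eval_mpoly z (p + q) = (\<Sum>\<mu>\<in>?F. Poly_Mapping.lookup (p + q) \<mu> * eval_monomial z \<mu>)"
    by (rule eval_mpoly_superset) (auto dest: keys_add[THEN subsetD])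
  also have "\<dots> = (\<Sum>\<mu>\<in>?F. Poly_Mapping.lookup p \<mu> * eval_monomial z \<mu>) + (\<Sum>\<mu>\<in>?F. Poly_Mapping.lookup q \<mu> * eval_monomial z \<mu>)"
    by (simp add: lookup_add distrib_right sum.distrib)
  also have "\<dots> = eval_mpoly z p + eval_mpoly z q"
    by (subst (1 2) eval_mpoly_superset[of ?F]) auto
  finally show ?thesis .
qed

lemma eval_mpoly_zero[simp]: "eval_mpoly z 0 = 0"
  unfolding eval_mpoly_def by simp

lemma eval_mpoly_sum: "eval_mpoly z (sum g F) = (\<Sum>i\<in>F. eval_mpoly z (g i))"
  by (induction F rule: infinite_finite_induct) (auto simp: eval_mpoly_add)

lemma eval_mpoly_single: "eval_mpoly z (Poly_Mapping.single \<mu> c) = c * eval_monomial z \<mu>"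
  unfolding eval_mpoly_def by simp

lemma eval_mpoly_mult: "eval_mpoly z (p * q) = eval_mpoly z p * eval_mpoly z q"
proof -
  have "p * q = (\<Sum>\<mu>\<in>Poly_Mapping.keys p. Poly_Mapping.single \<mu> (Poly_Mapping.lookup p \<mu>)) *
                (\<Sum>\<nu>\<in>Poly_Mapping.keys q. Poly_Mapping.single \<nu> (Poly_Mapping.lookup q \<nu>))"
    by (subst (1) poly_mapping_sum_single[of p], subst (1) poly_mapping_sum_single[of q]) (rule refl)
  also have "\<dots> = (\<Sum>\<mu>\<in>Poly_Mapping.keys p. \<Sum>\<nu>\<in>Poly_Mapping.keys q.
       Poly_Mapping.single (\<mu> + \<nu>) (Poly_Mapping.lookup p \<mu> * Poly_Mapping.lookup q \<nu>))"
    by (simp add: sum_product mult_single)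
  finally have "eval_mpoly z (p * q) = (\<Sum>\<mu>\<in>Poly_Mapping.keys p. \<Sum>\<nu>\<in>Poly_Mapping.keys q.
       (Poly_Mapping.lookup p \<mu> * eval_monomial z \<mu>) * (Poly_Mapping.lookup q \<nu> * eval_monomial z \<nu>))"
    by (simp add: eval_mpoly_sum eval_mpoly_single eval_monomial_add ac_simps)
  also have "\<dots> = eval_mpoly z p * eval_mpoly z q"
    unfolding eval_mpoly_def by (simp add: sum_product)
  finally show ?thesis .
qed

lemma eval_mpoly_map:
  assumes f: "is_ring_hom f"
  shows "eval_mpoly (f \<circ> z) (Poly_Mapping.map f q) = f (eval_mpoly z q)"
proof -
  have lk: "Poly_Mapping.lookup (Poly_Mapping.map f q) \<mu> = f (Poly_Mapping.lookup q \<mu>)" for \<mu>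
    using ring_homD(2)[OF f] by (auto simp: map.rep_eq when_def)
  have "eval_mpoly (f \<circ> z) (Poly_Mapping.map f q) = (\<Sum>\<mu>\<in>Poly_Mapping.keys q. f (Poly_Mapping.lookup q \<mu>) * eval_monomial (f \<circ> z) \<mu>)"
    by (subst eval_mpoly_superset[of "Poly_Mapping.keys q"]) (auto simp: lk in_keys_iff ring_homD(2)[OF f])
  also have "\<dots> = f (eval_mpoly z q)"
    unfolding eval_mpoly_def eval_monomial_def by (simp add: ring_homD[OF f])
  finally show ?thesis .
qed

section \<open>Free modules and coordinates\<close>

definition basis_repr :: "('r::comm_ring_1 \<Rightarrow> 's::comm_ring_1) \<Rightarrow> 's set \<Rightarrow> ('s \<Rightarrow> 'r) \<Rightarrow> 's \<Rightarrow> bool" where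
  "basis_repr f Bs c s \<longleftrightarrow> (\<forall>b. b \<notin> Bs \<longrightarrow> c b = 0) \<and> finite {b. c b \<noteq> 0} \<and>
     s = (\<Sum>b\<in>{b. c b \<noteq> 0}. f (c b) * b)"

definition basis_coord :: "('r::comm_ring_1 \<Rightarrow> 's::comm_ring_1) \<Rightarrow> 's set \<Rightarrow> 's \<Rightarrow> 's \<Rightarrow> 'r" where
  "basis_coord f Bs s = (THE c. basis_repr f Bs c s)"

lemma basis_repr_superset:
  assumes f: "is_ring_hom f" and "\<forall>b. b \<notin> Bs \<longrightarrow> c b = 0" "finite F" "{b. c b \<noteq> 0} \<subseteq> F"
  shows "basis_repr f Bs c (\<Sum>b\<in>F. f (c b) * b)"
proof -
  have "(\<Sum>b\<in>F. f (c b) * b) = (\<Sum>b\<in>{b. c b \<noteq> 0}. f (c b) * b)"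
    by (rule sum.mono_neutral_right) (use assms ring_homD(2)[OF f] in auto)
  moreover have "finite {b. c b \<noteq> 0}" using assms finite_subset by blast
  ultimately show ?thesis using assms unfolding basis_repr_def by auto
qed

lemma basis_repr_sum:
  assumes f: "is_ring_hom f" and "basis_repr f Bs c s" "finite F" "{b. c b \<noteq> 0} \<subseteq> F"
  shows "s = (\<Sum>b\<in>F. f (c b) * b)"
proof -
  have "(\<Sum>b\<in>F. f (c b) * b) = (\<Sum>b\<in>{b. c b \<noteq> 0}. f (c b) * b)"
    by (rule sum.mono_neutral_right) (use assms ring_homD(2)[OF f] in auto)
  then show ?thesis using assms unfolding basis_repr_def by auto
qed

locale free_module =
  fixes f :: "'r::comm_ring_1 \<Rightarrow> 's::comm_ring_1" and Bs :: "'s set"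
  assumes hom: "is_ring_hom f"
    and uniq: "\<And>s. \<exists>!c. basis_repr f Bs c s"
begin

abbreviation "coord \<equiv> basis_coord f Bs"

lemma coord_repr: "basis_repr f Bs (coord s) s"
  unfolding basis_coord_def using theI'[OF uniq] .

lemma coord_unique: "basis_repr f Bs c s \<Longrightarrow> coord s = c"
  using coord_repr uniq by blast

lemma finite_coord_support: "finite {b. coord s b \<noteq> 0}"
  using coord_repr unfolding basis_repr_def by auto

lemma coord_outside_basis: "b \<notin> Bs \<Longrightarrow> coord s b = 0"
  using coord_repr unfolding basis_repr_def by auto

lemma coord_linear:
  assumes "finite I"
  shows "coord (\<Sum>i\<in>I. f (r i) * s i) = (\<lambda>b. \<Sum>i\<in>I. r i * coord (s i) b)"
proof (rule coord_unique)
  define c where "c = (\<lambda>b. \<Sum>i\<in>I. r i * coord (s i) b)"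
  define U where "U = (\<Union>i\<in>I. {b. coord (s i) b \<noteq> 0})"
  have U: "finite U" unfolding U_def using assms finite_coord_support by auto
  have sub: "{b. c b \<noteq> 0} \<subseteq> U" unfolding c_def U_def
  proof
    fix b assume "b \<in> {b. (\<Sum>i\<in>I. r i * coord (s i) b) \<noteq> 0}"
    then obtain i where "i \<in> I" "r i * coord (s i) b \<noteq> 0"
      by (auto elim: sum.not_neutral_contains_not_neutral)
    then show "b \<in> (\<Union>i\<in>I. {b. coord (s i) b \<noteq> 0})" by (auto intro!: bexI[of _ i])
  qed
  have out: "\<forall>b. b \<notin> Bs \<longrightarrow> c b = 0" unfolding c_def using coord_outside_basis by simp
  have "(\<Sum>b\<in>U. f (c b) * b) = (\<Sum>b\<in>U. \<Sum>i\<in>I. f (r i) * (f (coord (s i) b) * b))"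
    unfolding c_def by (simp add: ring_homD[OF hom] sum_distrib_right sum_distrib_left ac_simps)
  also have "\<dots> = (\<Sum>i\<in>I. f (r i) * (\<Sum>b\<in>U. f (coord (s i) b) * b))"
    by (subst sum.swap) (simp add: sum_distrib_left)
  also have "\<dots> = (\<Sum>i\<in>I. f (r i) * s i)"
  proof (rule sum.cong[OF refl])
    fix i assume i: "i \<in> I"
    have "s i = (\<Sum>b\<in>U. f (coord (s i) b) * b)"
      by (rule basis_repr_sum[OF hom coord_repr U]) (use i in \<open>auto simp: U_def\<close>)
    then show "f (r i) * (\<Sum>b\<in>U. f (coord (s i) b) * b) = f (r i) * s i" by simp
  qed
  finally have eq: "(\<Sum>b\<in>U. f (c b) * b) = (\<Sum>i\<in>I. f (r i) * s i)" .
  show "basis_repr f Bs (\<lambda>b. \<Sum>i\<in>I. r i * coord (s i) b) (\<Sum>i\<in>I. f (r i) * s i)"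
    using basis_repr_superset[OF hom out U sub] eq unfolding c_def by simp
qed

lemma coord_basis_elem: "\<beta> \<in> Bs \<Longrightarrow> coord \<beta> = (\<lambda>b. if b = \<beta> then 1 else 0)"
proof (rule coord_unique)
  assume "\<beta> \<in> Bs"
  have "basis_repr f Bs (\<lambda>b. if b = \<beta> then 1 else 0) (\<Sum>b\<in>{\<beta>}. f ((\<lambda>b. if b = \<beta> then 1 else 0) b) * b)"
    by (rule basis_repr_superset[OF hom]) (use \<open>\<beta> \<in> Bs\<close> in auto)
  then show "basis_repr f Bs (\<lambda>b. if b = \<beta> then 1 else 0) \<beta>" by (simp add: ring_homD[OF hom])
qed

lemma coord_combination:
  assumes "finite F" "F \<subseteq> Bs" "\<beta> \<in> F"
  shows "coord (\<Sum>b\<in>F. f (r b) * b) \<beta> = r \<beta>"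
proof -
  have "coord (\<Sum>b\<in>F. f (r b) * b) \<beta> = (\<Sum>b\<in>F. r b * coord b \<beta>)"
    using coord_linear[OF assms(1), of r "\<lambda>b. b"] by simp
  also have "\<dots> = (\<Sum>b\<in>F. if b = \<beta> then r b else 0)"
    by (rule sum.cong[OF refl]) (use assms coord_basis_elem in auto)
  also have "\<dots> = r \<beta>" using assms by simp
  finally show ?thesis .
qed

lemma coord_zero: "coord 0 = (\<lambda>b. 0)"
  using coord_linear[of "{}"] by simp

lemma coord_add: "coord (x + y) = (\<lambda>b. coord x b + coord y b)"
proof -
  have "coord (\<Sum>i\<in>{0::nat,1}. f 1 * (if i = 0 then x else y)) =
      (\<lambda>b. \<Sum>i\<in>{0::nat,1}. 1 * coord (if i = 0 then x else y) b)"
    by (rule coord_linear) simp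
  then show ?thesis by (simp add: ring_homD[OF hom])
qed

lemma coord_scalar: "coord (f r * s) = (\<lambda>b. r * coord s b)"
  using coord_linear[of "{0::nat}" "\<lambda>_. r" "\<lambda>_. s"] by simp

lemma coord_mult: "coord (a * x) = (\<lambda>b'. \<Sum>b\<in>{b. coord x b \<noteq> 0}. coord x b * coord (a * b) b')"
proof -
  define F where "F = {b. coord x b \<noteq> 0}"
  have F: "finite F" using finite_coord_support F_def by simp
  have "x = (\<Sum>b\<in>F. f (coord x b) * b)"
    by (rule basis_repr_sum[OF hom coord_repr F]) (simp add: F_def)
  then have "a * x = a * (\<Sum>b\<in>F. f (coord x b) * b)" by simp
  also have "\<dots> = (\<Sum>b\<in>F. f (coord x b) * (a * b))" by (simp add: sum_distrib_left ac_simps)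
  finally have "a * x = (\<Sum>b\<in>F. f (coord x b) * (a * b))" .
  then show ?thesis using coord_linear[OF F] unfolding F_def by simp
qed

lemma coord_in_ideal_of_extension:
  assumes m: "ideal_in UNIV m" and x: "x \<in> ideal_gen_in UNIV (f ` m)"
  shows "coord x b \<in> m"
proof -
  have sU: "is_subring (UNIV :: 'r set)" unfolding is_subring_def by auto
  define T where "T = {s. \<forall>b. coord s b \<in> m}"
  have mi: "\<And>r y. y \<in> m \<Longrightarrow> r * y \<in> m" "\<And>y z. y \<in> m \<Longrightarrow> z \<in> m \<Longrightarrow> y + z \<in> m" "0 \<in> m"
    using m unfolding ideal_in_def by auto
  have "ideal_in UNIV T"
    unfolding ideal_in_def
  proof (intro conjI ballI)
    show "0 \<in> T" unfolding T_def using coord_zero mi by simp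
    show "x + y \<in> T" if "x \<in> T" "y \<in> T" for x y
      using that mi coord_add unfolding T_def by simp
    show "a * x \<in> T" if "x \<in> T" for a x
    proof -
      have "coord x b * coord (a * b) b' \<in> m" for b b'
        using that mi(1) unfolding T_def by (simp add: mult.commute)
      then have "(\<Sum>b\<in>{b. coord x b \<noteq> 0}. coord x b * coord (a * b) b') \<in> m" for b'
        by (intro ideal_in_sum[OF m sU])
      then show ?thesis unfolding T_def mem_Collect_eq by (subst coord_mult) simp
    qed
  qed simp
  moreover have "f ` m \<subseteq> T"
    unfolding T_def using mi(1) by (auto simp: coord_scalar[of _ 1, simplified] mult.commute)
  ultimately have "ideal_gen_in UNIV (f ` m) \<subseteq> T" by (rule ideal_gen_least)
  then show ?thesis using x unfolding T_def by auto
qed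

end

section \<open>Polynomials over a subring\<close>

definition poly_over :: "'a::comm_ring_1 set \<Rightarrow> 'a poly \<Rightarrow> bool" where
  "poly_over A p \<longleftrightarrow> (\<forall>i. coeff p i \<in> A)"

lemma poly_over_0[simp]: "is_subring A \<Longrightarrow> poly_over A 0"
  unfolding poly_over_def by (simp add: subringD)

lemma poly_over_const: "is_subring A \<Longrightarrow> c \<in> A \<Longrightarrow> poly_over A [:c:]"
  unfolding poly_over_def by (auto simp: coeff_pCons subringD split: nat.split)

lemma poly_over_1[simp]: "is_subring A \<Longrightarrow> poly_over A 1"
  unfolding one_pCons by (rule poly_over_const) (auto simp: subringD)

lemma poly_over_pCons: "is_subring A \<Longrightarrow> c \<in> A \<Longrightarrow> poly_over A p \<Longrightarrow> poly_over A (pCons c p)"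
  unfolding poly_over_def by (auto simp: coeff_pCons split: nat.split)

lemma poly_over_pCons_iff: "poly_over A (pCons c p) \<longleftrightarrow> c \<in> A \<and> poly_over A p"
  unfolding poly_over_def by (auto simp: coeff_pCons split: nat.split)

lemma poly_over_X: "is_subring A \<Longrightarrow> poly_over A [:0,1:]"
  by (auto intro!: poly_over_pCons simp: subringD)

lemma poly_over_add: "is_subring A \<Longrightarrow> poly_over A p \<Longrightarrow> poly_over A q \<Longrightarrow> poly_over A (p + q)"
  unfolding poly_over_def by (auto simp: subringD)

lemma poly_over_uminus: "is_subring A \<Longrightarrow> poly_over A p \<Longrightarrow> poly_over A (- p)"
  unfolding poly_over_def by (auto simp: subringD)

lemma poly_over_diff: "is_subring A \<Longrightarrow> poly_over A p \<Longrightarrow> poly_over A q \<Longrightarrow> poly_over A (p - q)"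
  unfolding poly_over_def by (auto simp: subringD)

lemma poly_over_mult: "is_subring A \<Longrightarrow> poly_over A p \<Longrightarrow> poly_over A q \<Longrightarrow> poly_over A (p * q)"
  unfolding poly_over_def coeff_mult by (auto intro!: subring_sum subringD(4))

lemma poly_over_monom: "is_subring A \<Longrightarrow> c \<in> A \<Longrightarrow> poly_over A (monom c n)"
  unfolding poly_over_def by (auto simp: coeff_monom subringD)

lemma poly_over_smult: "is_subring A \<Longrightarrow> c \<in> A \<Longrightarrow> poly_over A p \<Longrightarrow> poly_over A (Polynomial.smult c p)"
  unfolding poly_over_def by (auto simp: subringD)

lemma is_subring_poly_over: "is_subring A \<Longrightarrow> is_subring {p. poly_over A p}"
  unfolding is_subring_def[of "{p. poly_over A p}"] by (auto intro: poly_over_add poly_over_mult poly_over_uminus)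

lemma poly_over_mono: "poly_over A p \<Longrightarrow> A \<subseteq> B \<Longrightarrow> poly_over B p"
  unfolding poly_over_def by auto

lemma poly_sum_lt: "degree p < n \<Longrightarrow> poly p x = (\<Sum>i<n. coeff p i * x ^ i)" for x :: "'a::comm_ring_1"
proof -
  assume "degree p < n"
  then have "(\<Sum>i<n. coeff p i * x ^ i) = (\<Sum>i\<le>degree p. coeff p i * x ^ i)"
    by (intro sum.mono_neutral_right) (auto simp: coeff_eq_0)
  then show ?thesis by (simp add: poly_altdef)
qed

lemma poly_in_subring: "is_subring B \<Longrightarrow> poly_over B p \<Longrightarrow> x \<in> B \<Longrightarrow> poly p x \<in> B"
  unfolding poly_altdef poly_over_def by (auto intro!: subring_sum subringD(4) subring_power)

lemma poly_in_ideal: "ideal_in B I \<Longrightarrow> is_subring B \<Longrightarrow> poly_over I p \<Longrightarrow> x \<in> B \<Longrightarrow> poly p x \<in> I"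
  unfolding poly_altdef poly_over_def
  by (auto intro!: ideal_in_sum ideal_inD(5) subring_power)

lemma map_poly_add_on:
  assumes "hom_on A h" "is_subring A" "poly_over A p" "poly_over A q"
  shows "map_poly h (p + q) = map_poly h p + map_poly h q"
  by (rule poly_eqI) (use assms in \<open>auto simp: coeff_map_poly hom_onD poly_over_def\<close>)

lemma map_poly_diff_on:
  assumes "hom_on A h" "is_subring A" "poly_over A p" "poly_over A q"
  shows "map_poly h (p - q) = map_poly h p - map_poly h q"
  by (rule poly_eqI) (use assms in \<open>auto simp: coeff_map_poly hom_onD poly_over_def\<close>)

lemma map_poly_mult_on:
  assumes h: "hom_on A h" and s: "is_subring A" and p: "poly_over A p" and q: "poly_over A q"
  shows "map_poly h (p * q) = map_poly h p * map_poly h q"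
proof (rule poly_eqI)
  fix n
  have h0: "h 0 = 0" by (rule hom_onD(2)[OF h s])
  have "coeff (map_poly h (p * q)) n = h (\<Sum>i\<le>n. coeff p i * coeff q (n-i))"
    by (simp add: coeff_map_poly h0 coeff_mult)
  also have "\<dots> = (\<Sum>i\<le>n. h (coeff p i * coeff q (n-i)))"
    by (rule hom_on_sum[OF h s]) (use p q s in \<open>auto simp: poly_over_def subringD\<close>)
  also have "\<dots> = (\<Sum>i\<le>n. h (coeff p i) * h (coeff q (n-i)))"
    by (rule sum.cong[OF refl]) (use p q s in \<open>auto simp: poly_over_def hom_onD[OF h s]\<close>)
  also have "\<dots> = coeff (map_poly h p * map_poly h q) n"
    by (simp add: coeff_map_poly h0 coeff_mult)
  finally show "coeff (map_poly h (p * q)) n = coeff (map_poly h p * map_poly h q) n" .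
qed

lemma map_poly_const_on: "hom_on A h \<Longrightarrow> is_subring A \<Longrightarrow> map_poly h [:c:] = [:h c:]"
  by (rule poly_eqI) (auto simp: coeff_map_poly hom_onD coeff_pCons split: nat.split)

lemma map_poly_smult_on:
  assumes "hom_on A h" "is_subring A" "c \<in> A" "poly_over A p"
  shows "map_poly h (Polynomial.smult c p) = Polynomial.smult (h c) (map_poly h p)"
  by (rule poly_eqI) (use assms in \<open>auto simp: coeff_map_poly hom_onD poly_over_def\<close>)

lemma sum_delta_mult: "k < (d::nat) \<Longrightarrow> (\<Sum>j<d. (if k = j then t else 0) * f j) = t * (f k :: 'a::comm_ring_1)"
proof -
  assume k: "k < d"
  have "(\<Sum>j<d. (if k = j then t else 0) * f j) = (\<Sum>j<d. if k = j then t * f j else 0)"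
    by (rule sum.cong) auto
  also have "\<dots> = t * f k" using k by (simp add: sum.delta)
  finally show ?thesis .
qed

lemma det_in_subring:
  assumes s: "is_subring S" and A: "\<And>i j. i < dim_row A \<Longrightarrow> j < dim_col A \<Longrightarrow> A $$ (i,j) \<in> S"
  shows "det A \<in> S"
proof (cases "dim_row A = dim_col A")
  case True
  have "(\<Sum>p\<in>{p. p permutes {0..<dim_row A}}. signof p * (\<Prod>i = 0..<dim_row A. A $$ (i, p i))) \<in> S"
  proof (rule subring_sum[OF s])
    fix p assume "p \<in> {p. p permutes {0..<dim_row A}}"
    then have p: "p permutes {0..<dim_row A}" by simp
    have m1: "-1 \<in> S" by (rule subringD(5)[OF s subringD(1)[OF s]])
    have "(signof p :: 'a) \<in> {1, -1}" by (rule signof_pm_one)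
    then have "(signof p :: 'a) \<in> S" using subringD(1)[OF s] m1 by auto
    moreover have "(\<Prod>i = 0..<dim_row A. A $$ (i, p i)) \<in> S"
    proof (rule subring_prod[OF s])
      fix i assume "i \<in> {0..<dim_row A}"
      then have "i < dim_row A" "p i < dim_col A" using permutes_in_image[OF p] True by auto
      then show "A $$ (i, p i) \<in> S" by (rule A)
    qed
    ultimately show "signof p * (\<Prod>i = 0..<dim_row A. A $$ (i, p i)) \<in> S" by (rule subringD(4)[OF s])
  qed
  then show ?thesis unfolding det_def using True by simp
next
  case False
  then show ?thesis unfolding det_def using s by (simp add: subringD)
qed

lemma adj_mat_in_subring:
  assumes s: "is_subring S" and A: "\<And>i j. i < dim_row A \<Longrightarrow> j < dim_col A \<Longrightarrow> A $$ (i,j) \<in> S"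
    and ij: "i < dim_row A" "j < dim_col A"
  shows "adj_mat A $$ (i,j) \<in> S"
proof -
  have "det (mat_delete A j i) \<in> S"
    by (rule det_in_subring[OF s]) (auto simp: mat_delete_def intro!: A)
  moreover have "(-1::'a) ^ (j + i) \<in> S" using s by (auto intro!: subring_power simp: subringD)
  ultimately have "(-1::'a) ^ (j + i) * det (mat_delete A j i) \<in> S" by (rule subringD(4)[OF s, rotated])
  then show ?thesis unfolding adj_mat_def cofactor_def using ij by simp
qed

text \<open>The determinant trick: \<open>adj N * N = det N \<cdot> 1\<close> applied to \<open>v\<close> and read off in the
  coordinate where \<open>v\<close> is \<open>1\<close>.\<close>

lemma det_in_ideal_if_kills_vector:
  assumes B: "is_subring B" and I: "ideal_in B I" and d: "0 < d"
    and N: "N \<in> carrier_mat d d" and NB: "\<And>i j. i < d \<Longrightarrow> j < d \<Longrightarrow> N $$ (i,j) \<in> B"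
    and v: "v \<in> carrier_vec d" and v0: "v $ 0 = 1"
    and Nv: "\<And>k. k < d \<Longrightarrow> (N *\<^sub>v v) $ k \<in> I"
  shows "det N \<in> I"
proof -
  have adj: "adj_mat N \<in> carrier_mat d d" using adj_mat(1)[OF N] .
  have "det N = (\<Sum>j<d. (if 0 = j then det N else 0) * v $ j)"
    using sum_delta_mult[OF d, of "det N" "\<lambda>j. v $ j"] v0 by simp
  also have "\<dots> = ((det N \<cdot>\<^sub>m 1\<^sub>m d) *\<^sub>v v) $ 0"
    using d v by (auto simp: scalar_prod_def lessThan_atLeast0 intro!: sum.cong)
  also have "\<dots> = (adj_mat N *\<^sub>v (N *\<^sub>v v)) $ 0"
    using adj_mat(3)[OF N] assoc_mult_mat_vec[OF adj N v] by simp
  also have "\<dots> = (\<Sum>k<d. adj_mat N $$ (0,k) * (N *\<^sub>v v) $ k)"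
    using d adj N by (auto simp: scalar_prod_def lessThan_atLeast0 intro!: sum.cong)
  also have "\<dots> \<in> I"
    by (rule ideal_in_sum[OF I B], rule ideal_inD(4)[OF I B adj_mat_in_subring[OF B] Nv])
      (use d N NB in auto)
  finally show ?thesis .
qed

lemma char_poly_poly_over:
  assumes A: "is_subring A" and M: "M \<in> carrier_mat d d"
    and MA: "\<And>i j. i < d \<Longrightarrow> j < d \<Longrightarrow> M $$ (i,j) \<in> A"
  shows "poly_over A (char_poly M)"
proof -
  have "char_poly_matrix M $$ (i,j) \<in> {p. poly_over A p}" if "i < d" "j < d" for i j
    using that M
    by (cases "i = j") (auto simp: char_poly_matrix_def intro!: poly_over_pCons[OF A]
        poly_over_const[OF A] subringD(5)[OF A] MA poly_over_1[OF A] subringD(1)[OF A])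
  moreover have "dim_row (char_poly_matrix M) = d" "dim_col (char_poly_matrix M) = d"
    using char_poly_matrix_closed[OF M] by auto
  ultimately have "det (char_poly_matrix M) \<in> {p. poly_over A p}"
    by (intro det_in_subring[OF is_subring_poly_over[OF A]]) auto
  then show ?thesis unfolding char_poly_def by simp
qed

section \<open>Rational points of finitely generated algebras\<close>

text \<open>A \<open>k\<close>-point of \<open>Spec (A/P)\<close> at which \<open>\<alpha>\<close> does not vanish:
  a \<open>k\<close>-algebra map \<open>A \<rightarrow> k\<close> (with \<open>k\<close> embedded via \<open>phi\<close>) killing \<open>P\<close> but not \<open>\<alpha>\<close>.\<close>

definition separating_point :: "('k::field \<Rightarrow> 'a::comm_ring_1) \<Rightarrow> 'a set \<Rightarrow> 'a set \<Rightarrow> 'a \<Rightarrow> bool" where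
  "separating_point phi A P \<alpha> \<longleftrightarrow>
     (\<exists>\<chi>. hom_on A \<chi> \<and> (\<forall>c. \<chi> (phi c) = c) \<and> (\<forall>x\<in>P. \<chi> x = 0) \<and> \<chi> \<alpha> \<noteq> 0)"

lemma gen_subring_insert_eq_poly:
  assumes s: "is_subring A0" and A0: "A0 = gen_subring X"
  shows "gen_subring (insert g X) = {poly p g | p. poly_over A0 p}"
proof
  let ?E = "{poly p g | p. poly_over A0 p}"
  have sE: "is_subring ?E"
    unfolding is_subring_def
  proof (intro conjI ballI)
    show "1 \<in> ?E" using poly_over_1[OF s] by (metis (mono_tags, lifting) mem_Collect_eq poly_1)
  next
    fix x y assume "x \<in> ?E" "y \<in> ?E"
    then obtain p q where "poly_over A0 p" "poly_over A0 q" "x = poly p g" "y = poly q g" by auto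
    then show "x + y \<in> ?E" "x * y \<in> ?E"
      using poly_over_add[OF s] poly_over_mult[OF s] by (metis (mono_tags, lifting) mem_Collect_eq poly_add poly_mult)+
  next
    fix x assume "x \<in> ?E"
    then obtain p where "poly_over A0 p" "x = poly p g" by auto
    then show "- x \<in> ?E" using poly_over_uminus[OF s] by (metis (mono_tags, lifting) mem_Collect_eq poly_minus)
  qed
  have XE: "insert g X \<subseteq> ?E"
  proof
    fix x assume "x \<in> insert g X"
    then show "x \<in> ?E"
    proof
      assume "x = g"
      then have "x = poly [:0,1:] g" by simp
      then show ?thesis using poly_over_X[OF s] by blast
    next
      assume "x \<in> X"
      then have "x \<in> A0" using A0 gen_subring_base by blast
      then have "x = poly [:x:] g" "poly_over A0 [:x:]" using poly_over_const[OF s] by auto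
      then show ?thesis by blast
    qed
  qed
  show "gen_subring (insert g X) \<subseteq> ?E" by (rule gen_subring_least[OF sE XE])
  show "?E \<subseteq> gen_subring (insert g X)"
  proof
    fix x assume "x \<in> ?E"
    then obtain p where p: "poly_over A0 p" "x = poly p g" by auto
    have "A0 \<subseteq> gen_subring (insert g X)" unfolding A0 by (rule gen_subring_mono) auto
    then have "poly_over (gen_subring (insert g X)) p" using p(1) by (rule poly_over_mono[rotated])
    then show "x \<in> gen_subring (insert g X)" unfolding p(2)
      by (rule poly_in_subring[OF is_subring_gen_subring]) (auto intro: gen_subring.base)
  qed
qed

lemma alg_closed_field_infinite:
  assumes "alg_closed_field TYPE('k::field)"
  shows "infinite (UNIV :: 'k set)"
proof
  assume fin: "finite (UNIV :: 'k set)"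
  define q :: "'k poly" where "q = (\<Prod>a\<in>UNIV. [:-a, 1:])"
  have dq: "degree q = card (UNIV :: 'k set)"
    unfolding q_def by (subst degree_prod_eq_sum_degree) (auto simp: fin)
  have "card (UNIV :: 'k set) > 0" using fin by (simp add: card_gt_0_iff)
  then have d: "degree (1 + q) > 0" using dq by (simp add: degree_add_eq_right)
  obtain x where "poly (1 + q) x = 0" using assms d unfolding alg_closed_field_def by blast
  moreover have "poly q x = 0" unfolding q_def poly_prod using fin
    by (auto simp: prod_zero_iff)
  ultimately show False by simp
qed

locale simple_extension =
  fixes A0 A1 :: "'a::comm_ring_1 set" and g :: 'a and P1 :: "'a set" and phi :: "'k::field \<Rightarrow> 'a"
  assumes s0: "is_subring A0" and s1: "is_subring A1" and A1: "A1 = {poly p g | p. poly_over A0 p}"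
    and P1: "prime_ideal_in A1 P1" and phiA0: "range phi \<subseteq> A0" and phi: "is_ring_hom phi"
begin

definition "P0 = P1 \<inter> A0"

lemma A0_subset_A1: "A0 \<subseteq> A1"
proof
  fix x assume "x \<in> A0"
  then have "poly_over A0 [:x:]" "poly [:x:] g = x" using poly_over_const[OF s0] by auto
  then show "x \<in> A1" unfolding A1 by (metis (mono_tags, lifting) mem_Collect_eq)
qed

lemma g_in_A1: "g \<in> A1"
proof -
  have "poly [:0,1:] g = g" by simp
  then show ?thesis unfolding A1 using poly_over_X[OF s0] by (metis (mono_tags, lifting) mem_Collect_eq)
qed

lemma poly_g_in_A1: "poly_over A0 p \<Longrightarrow> poly p g \<in> A1"
  unfolding A1 by blast

lemma ideal_P1: "ideal_in A1 P1" using prime_idealD(1)[OF P1] .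

lemma P0_subset_P1: "P0 \<subseteq> P1" unfolding P0_def by auto

lemma P0_prime: "prime_ideal_in A0 P0"
proof -
  have "ideal_in A0 P0"
    unfolding ideal_in_def P0_def using ideal_inD[OF ideal_P1 s1] A0_subset_A1 s0 by (auto simp: subringD)
  moreover have "P0 \<noteq> A0" using prime_idealD(2)[OF P1] s0 subringD(1) unfolding P0_def by blast
  moreover have "\<forall>a\<in>A0. \<forall>b\<in>A0. a * b \<in> P0 \<longrightarrow> a \<in> P0 \<or> b \<in> P0"
    using prime_idealD(3)[OF P1] A0_subset_A1 unfolding P0_def by blast
  ultimately show ?thesis unfolding prime_ideal_in_def by blast
qed

lemma poly_g_in_P1: "poly_over P0 p \<Longrightarrow> poly p g \<in> P1"
  by (rule poly_in_ideal[OF ideal_P1 s1 poly_over_mono[OF _ P0_subset_P1] g_in_A1])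

lemma evaluation_at_g_well_defined:
  fixes \<chi>0 :: "'a \<Rightarrow> 'k"
  assumes h0: "hom_on A0 \<chi>0"
    and vanish: "\<And>p. poly_over A0 p \<Longrightarrow> poly p g \<in> P1 \<Longrightarrow> poly (map_poly \<chi>0 p) c0 = 0"
  shows "\<exists>\<chi>. \<forall>p. poly_over A0 p \<longrightarrow> \<chi> (poly p g) = poly (map_poly \<chi>0 p) c0"
proof -
  define rep where "rep x = (SOME p. poly_over A0 p \<and> poly p g = x)" for x
  have "poly (map_poly \<chi>0 (rep (poly p g))) c0 = poly (map_poly \<chi>0 p) c0" if p: "poly_over A0 p" for p
  proof -
    have "\<exists>q. poly_over A0 q \<and> poly q g = poly p g" using p by blast
    then have r: "poly_over A0 (rep (poly p g))" "poly (rep (poly p g)) g = poly p g"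
      unfolding rep_def by (metis (mono_tags, lifting) someI_ex)+
    have "poly (rep (poly p g) - p) g = 0" using r by simp
    then have "poly (rep (poly p g) - p) g \<in> P1" using ideal_inD(2)[OF ideal_P1 s1] by simp
    then have "poly (map_poly \<chi>0 (rep (poly p g) - p)) c0 = 0"
      by (rule vanish[OF poly_over_diff[OF s0 r(1) p]])
    then show ?thesis using map_poly_diff_on[OF h0 s0 r(1) p] by simp
  qed
  then show ?thesis by (intro exI[of _ "\<lambda>x. poly (map_poly \<chi>0 (rep x)) c0"]) simp
qed

lemma extend_hom:
  fixes \<chi>0 :: "'a \<Rightarrow> 'k"
  assumes h0: "hom_on A0 \<chi>0" and hphi: "\<And>c. \<chi>0 (phi c) = c"
    and vanish: "\<And>p. poly_over A0 p \<Longrightarrow> poly p g \<in> P1 \<Longrightarrow> poly (map_poly \<chi>0 p) c0 = 0"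
  shows "\<exists>\<chi>. hom_on A1 \<chi> \<and> (\<forall>c. \<chi> (phi c) = c) \<and> (\<forall>x\<in>P1. \<chi> x = 0) \<and>
            (\<forall>p. poly_over A0 p \<longrightarrow> \<chi> (poly p g) = poly (map_poly \<chi>0 p) c0)"
proof -
  obtain \<chi> where key: "\<And>p. poly_over A0 p \<Longrightarrow> \<chi> (poly p g) = poly (map_poly \<chi>0 p) c0"
    using evaluation_at_g_well_defined[OF h0 vanish] by blast
  have "hom_on A1 \<chi>" unfolding hom_on_def
  proof (intro conjI ballI)
    have "\<chi> 1 = \<chi> (poly 1 g)" by simp
    also have "\<dots> = 1" using key[OF poly_over_1[OF s0]] map_poly_const_on[OF h0 s0, of 1] hom_onD(1)[OF h0 s0]
      by (simp add: one_pCons)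
    finally show "\<chi> 1 = 1" .
  next
    fix x y assume "x \<in> A1" "y \<in> A1"
    then obtain p q where pq: "poly_over A0 p" "poly_over A0 q" "x = poly p g" "y = poly q g" unfolding A1 by auto
    have "\<chi> (x + y) = \<chi> (poly (p + q) g)" using pq by simp
    also have "\<dots> = \<chi> x + \<chi> y" using key[OF poly_over_add[OF s0 pq(1,2)]] key[OF pq(1)] key[OF pq(2)] pq
      map_poly_add_on[OF h0 s0 pq(1,2)] by simp
    finally show "\<chi> (x + y) = \<chi> x + \<chi> y" .
    have "\<chi> (x * y) = \<chi> (poly (p * q) g)" using pq by simp
    also have "\<dots> = \<chi> x * \<chi> y" using key[OF poly_over_mult[OF s0 pq(1,2)]] key[OF pq(1)] key[OF pq(2)] pq
      map_poly_mult_on[OF h0 s0 pq(1,2)] by simp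
    finally show "\<chi> (x * y) = \<chi> x * \<chi> y" .
  qed
  moreover have "\<chi> (phi c) = c" for c
  proof -
    have pc: "poly_over A0 [:phi c:]" using poly_over_const[OF s0] phiA0 by auto
    have "\<chi> (phi c) = \<chi> (poly [:phi c:] g)" by simp
    also have "\<dots> = c" using key[OF pc] map_poly_const_on[OF h0 s0] hphi by simp
    finally show ?thesis .
  qed
  moreover have "\<chi> x = 0" if x: "x \<in> P1" for x
  proof -
    have "x \<in> A1" using x ideal_inD(1)[OF ideal_P1 s1] by blast
    then obtain p where p: "poly_over A0 p" "x = poly p g" unfolding A1 by auto
    then show ?thesis using key[OF p(1)] vanish[OF p(1)] x by simp
  qed
  ultimately show ?thesis using key by blast
qed

text \<open>If every relation of \<open>g\<close> over \<open>A0\<close> modulo \<open>P1\<close> has all coefficients in \<open>P0\<close>, a point of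
  \<open>A0/P0\<close> extends by sending \<open>g\<close> to any value that is not a root of the image of a polynomial
  representing \<open>\<alpha>\<close>.\<close>

lemma separating_point_transcendental:
  assumes IH: "\<And>\<alpha>0. \<alpha>0 \<in> A0 \<Longrightarrow> \<alpha>0 \<notin> P0 \<Longrightarrow> separating_point phi A0 P0 \<alpha>0"
    and T: "\<And>p. poly_over A0 p \<Longrightarrow> poly p g \<in> P1 \<Longrightarrow> poly_over P0 p"
    and inf: "infinite (UNIV :: 'k set)"
    and \<alpha>: "\<alpha> \<in> A1" "\<alpha> \<notin> P1"
  shows "separating_point phi A1 P1 \<alpha>"
proof -
  obtain q where q: "poly_over A0 q" "\<alpha> = poly q g" using \<alpha>(1) unfolding A1 by auto
  have "\<not> poly_over P0 q" using poly_g_in_P1 q \<alpha>(2) by blast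
  then obtain j where j: "coeff q j \<notin> P0" unfolding poly_over_def by auto
  obtain \<chi>0 where \<chi>0: "hom_on A0 \<chi>0" "\<And>c. \<chi>0 (phi c) = c" "\<And>x. x \<in> P0 \<Longrightarrow> \<chi>0 x = 0" "\<chi>0 (coeff q j) \<noteq> 0"
    using IH[of "coeff q j"] q(1) j unfolding separating_point_def poly_over_def by blast
  have h00: "\<chi>0 0 = 0" by (rule hom_onD(2)[OF \<chi>0(1) s0])
  have "coeff (map_poly \<chi>0 q) j \<noteq> 0" using \<chi>0(4) by (simp add: coeff_map_poly h00)
  then have "map_poly \<chi>0 q \<noteq> 0" by auto
  then have "finite {x. poly (map_poly \<chi>0 q) x = 0}" by (rule poly_roots_finite)
  then obtain c0 where c0: "poly (map_poly \<chi>0 q) c0 \<noteq> 0" using inf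
    by (metis (mono_tags, lifting) UNIV_I ex_new_if_finite mem_Collect_eq)
  have vanish: "poly (map_poly \<chi>0 p) c0 = 0" if "poly_over A0 p" "poly p g \<in> P1" for p
  proof -
    have "map_poly \<chi>0 p = 0" using T[OF that] \<chi>0(3) unfolding poly_over_def
      by (intro poly_eqI) (simp add: coeff_map_poly h00)
    then show ?thesis by simp
  qed
  obtain \<chi> where \<chi>: "hom_on A1 \<chi>" "\<forall>c. \<chi> (phi c) = c" "\<forall>x\<in>P1. \<chi> x = 0"
      "\<forall>p. poly_over A0 p \<longrightarrow> \<chi> (poly p g) = poly (map_poly \<chi>0 p) c0"
    using extend_hom[OF \<chi>0(1,2) vanish] by blast
  have "\<chi> \<alpha> \<noteq> 0" using \<chi>(4) q c0 by simp
  then show ?thesis unfolding separating_point_def using \<chi> by blast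
qed

lemma ideal_P0: "ideal_in A0 P0" using prime_idealD(1)[OF P0_prime] .

lemma divides_base_element_mod_P1:
  assumes \<alpha>: "\<alpha> \<in> A1" "\<alpha> \<notin> P1"
  shows "poly_over A0 b \<Longrightarrow> poly b \<alpha> \<in> P1 \<Longrightarrow> \<not> poly_over P0 b \<Longrightarrow> \<exists>c u. c \<in> A0 \<and> c \<notin> P0 \<and> u \<in> A1 \<and> c - \<alpha> * u \<in> P1"
proof (induction "degree b" arbitrary: b rule: less_induct)
  case less
  obtain c b' where b: "b = pCons c b'" by (cases b) auto
  have cA: "c \<in> A0" and b'A: "poly_over A0 b'" using less.prems(1) unfolding b poly_over_pCons_iff by auto
  have u: "poly b' \<alpha> \<in> A1" by (rule poly_in_subring[OF s1 poly_over_mono[OF b'A A0_subset_A1] \<alpha>(1)])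
  have eq: "poly b \<alpha> = c + \<alpha> * poly b' \<alpha>" unfolding b by simp
  show ?case
  proof (cases "c \<in> P0")
    case False
    have "c - \<alpha> * (- poly b' \<alpha>) = poly b \<alpha>" using eq by simp
    then show ?thesis using False cA u less.prems(2) s1 by (metis subringD(5))
  next
    case True
    have cP1: "c \<in> P1" using True P0_subset_P1 by blast
    have "\<alpha> * poly b' \<alpha> = poly b \<alpha> - c" using eq by simp
    also have "\<dots> \<in> P1" using ideal_inD(7)[OF ideal_P1 s1 less.prems(2) cP1] .
    finally have "poly b' \<alpha> \<in> P1" using prime_idealD(3)[OF P1 \<alpha>(1) u] \<alpha>(2) by blast
    moreover have nb': "\<not> poly_over P0 b'" using less.prems(3) True unfolding b poly_over_pCons_iff by auto
    moreover have "degree b' < degree b"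
    proof -
      have "b' \<noteq> 0" using nb' ideal_inD(2)[OF ideal_P0 s0] unfolding poly_over_def by auto
      then show ?thesis unfolding b by simp
    qed
    ultimately show ?thesis using less.hyps b'A by blast
  qed
qed

end

locale minimal_relation = simple_extension +
  fixes H :: "'a poly" and d :: nat
  assumes H: "poly_over A0 H" and HP: "poly H g \<in> P1" and Hd: "degree H = d"
    and Hmin: "\<And>p. poly_over A0 p \<Longrightarrow> poly p g \<in> P1 \<Longrightarrow> degree p < d \<Longrightarrow> poly_over P0 p"
    and Hnot: "\<not> poly_over P0 H"
begin

abbreviation "a \<equiv> coeff H d"

lemma lead_in_A0: "a \<in> A0" using H unfolding poly_over_def by auto

lemma degree_min_pos: "d > 0"
proof (rule ccontr)
  assume "\<not> d > 0"
  then have d0: "d = 0" by simp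
  then have "poly H g = coeff H 0" using Hd by (simp add: poly_altdef)
  then have "coeff H 0 \<in> P0" using HP lead_in_A0 d0 unfolding P0_def by auto
  moreover have "coeff H i \<in> P0" if "i > 0" for i
    using that Hd d0 ideal_inD(2)[OF ideal_P0 s0] by (simp add: coeff_eq_0)
  ultimately have "poly_over P0 H" unfolding poly_over_def by (metis gr0I)
  then show False using Hnot by simp
qed

lemma lead_not_in_P0: "a \<notin> P0"
proof
  assume aP: "a \<in> P0"
  define H' where "H' = H - monom a d"
  have H'A: "poly_over A0 H'" unfolding H'_def by (rule poly_over_diff[OF s0 H poly_over_monom[OF s0 lead_in_A0]])
  have "poly H' g = poly H g - a * g ^ d" unfolding H'_def by (simp add: poly_monom)
  also have "\<dots> \<in> P1"
  proof (rule ideal_inD(7)[OF ideal_P1 s1 HP])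
    have "a \<in> P1" using aP P0_subset_P1 by blast
    then show "a * g ^ d \<in> P1" using ideal_inD(5)[OF ideal_P1 s1 subring_power[OF s1 g_in_A1]] by blast
  qed
  finally have H'P: "poly H' g \<in> P1" .
  have "degree H' \<le> d - 1"
  proof (rule degree_le, intro allI impI)
    fix i assume "i > d - 1"
    then have "i \<ge> d" using degree_min_pos by simp
    then show "coeff H' i = 0" unfolding H'_def using Hd
      by (cases "i = d") (auto simp: coeff_monom coeff_eq_0)
  qed
  then have "degree H' < d" using degree_min_pos by simp
  then have "poly_over P0 H'" using Hmin H'A H'P by blast
  moreover have "poly_over P0 (monom a d)" using aP unfolding poly_over_def by (simp add: coeff_monom ideal_inD(2)[OF ideal_P0 s0])
  ultimately have "poly_over P0 (H' + monom a d)" unfolding poly_over_def using ideal_inD(3)[OF ideal_P0 s0] by simp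
  then show False using Hnot unfolding H'_def by simp
qed

lemma pseudo_division:
  "poly_over A0 p \<Longrightarrow> \<exists>e Q R. poly_over A0 Q \<and> poly_over A0 R \<and> Polynomial.smult (a ^ e) p = Q * H + R \<and> degree R < d"
proof (induction "degree p" arbitrary: p rule: less_induct)
  case less
  show ?case
  proof (cases "degree p < d")
    case True
    then show ?thesis using less.prems poly_over_0[OF s0] by (intro exI[of _ 0] exI[of _ 0] exI[of _ p]) simp
  next
    case False
    define n where "n = degree p"
    define lp where "lp = coeff p n"
    define k where "k = n - d"
    define p' where "p' = Polynomial.smult a p - monom lp k * H"
    have lpA: "lp \<in> A0" using less.prems unfolding poly_over_def lp_def by auto
    have p'A: "poly_over A0 p'" unfolding p'_def
      by (rule poly_over_diff[OF s0 poly_over_smult[OF s0 lead_in_A0 less.prems] poly_over_mult[OF s0 poly_over_monom[OF s0 lpA] H]])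
    have nd: "n \<ge> d" using False n_def by simp
    have "degree p' \<le> n - 1"
    proof (rule degree_le, intro allI impI)
      fix i assume "i > n - 1"
      then have i: "i \<ge> n" using nd degree_min_pos by simp
      show "coeff p' i = 0"
      proof (cases "i = n")
        case True
        have "coeff (monom lp k * H) n = lp * a" using nd by (simp add: coeff_monom_mult k_def)
        then show ?thesis unfolding p'_def using True by (simp add: lp_def mult.commute)
      next
        case False
        then have "i > n" using i by simp
        then show ?thesis unfolding p'_def using nd Hd
          by (simp add: coeff_monom_mult k_def coeff_eq_0 n_def)
      qed
    qed
    then have "degree p' < degree p" using nd degree_min_pos n_def by simp
    then obtain e Q R where QR: "poly_over A0 Q" "poly_over A0 R" "Polynomial.smult (a ^ e) p' = Q * H + R" "degree R < d"
      using less.hyps p'A by blast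
    have "Polynomial.smult (a ^ Suc e) p = Polynomial.smult (a ^ e) (p' + monom lp k * H)"
      unfolding p'_def by (simp add: mult.commute)
    also have "\<dots> = (Q + Polynomial.smult (a ^ e) (monom lp k)) * H + R"
      using QR(3) by (simp add: smult_add_right algebra_simps)
    finally show ?thesis using QR poly_over_add[OF s0 QR(1) poly_over_smult[OF s0 subring_power[OF s0 lead_in_A0] poly_over_monom[OF s0 lpA]]]
      by blast
  qed
qed

lemma relations_vanish_at_root:
  fixes \<chi>0 :: "'a \<Rightarrow> 'k::field"
  assumes h0: "hom_on A0 \<chi>0" and kill: "\<And>x. x \<in> P0 \<Longrightarrow> \<chi>0 x = 0" and a0: "\<chi>0 a \<noteq> 0"
    and c0: "poly (map_poly \<chi>0 H) c0 = 0"
    and p: "poly_over A0 p" "poly p g \<in> P1"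
  shows "poly (map_poly \<chi>0 p) c0 = 0"
proof -
  obtain e Q R where QR: "poly_over A0 Q" "poly_over A0 R" "Polynomial.smult (a ^ e) p = Q * H + R" "degree R < d"
    using pseudo_division[OF p(1)] by blast
  have "poly R g = a ^ e * poly p g - poly Q g * poly H g"
    using arg_cong[OF QR(3), of "\<lambda>q. poly q g"] by simp
  also have "\<dots> \<in> P1"
    by (rule ideal_inD(7)[OF ideal_P1 s1 ideal_inD(4)[OF ideal_P1 s1 _ p(2)] ideal_inD(4)[OF ideal_P1 s1 _ HP]])
      (use subring_power[OF s1] A0_subset_A1 lead_in_A0 poly_g_in_A1 QR(1) in auto)
  finally have "poly_over P0 R" using Hmin QR(2,4) by blast
  have h00: "\<chi>0 0 = 0" by (rule hom_onD(2)[OF h0 s0])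
  have mR: "map_poly \<chi>0 R = 0"
    using \<open>poly_over P0 R\<close> kill unfolding poly_over_def by (intro poly_eqI) (simp add: coeff_map_poly h00)
  have "map_poly \<chi>0 (Polynomial.smult (a ^ e) p) = map_poly \<chi>0 (Q * H + R)" using QR(3) by simp
  then have "Polynomial.smult (\<chi>0 a ^ e) (map_poly \<chi>0 p) = map_poly \<chi>0 Q * map_poly \<chi>0 H"
    using map_poly_smult_on[OF h0 s0 subring_power[OF s0 lead_in_A0] p(1)] hom_on_power[OF h0 s0 lead_in_A0]
      map_poly_add_on[OF h0 s0 poly_over_mult[OF s0 QR(1) H] QR(2)] map_poly_mult_on[OF h0 s0 QR(1) H] mR
    by simp
  then have "\<chi>0 a ^ e * poly (map_poly \<chi>0 p) c0 = 0"
    using arg_cong[of _ _ "\<lambda>q. poly q c0"] c0 by (metis mult_zero_right poly_mult poly_smult)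
  then show ?thesis using a0 by simp
qed

lemma mapped_min_poly_has_root:
  fixes \<chi>0 :: "'a \<Rightarrow> 'k::field"
  assumes alg: "alg_closed_field TYPE('k::field)" and h0: "hom_on A0 \<chi>0" and a0: "\<chi>0 a \<noteq> 0"
  shows "\<exists>c0. poly (map_poly \<chi>0 H) c0 = 0"
proof -
  have h00: "\<chi>0 0 = 0" by (rule hom_onD(2)[OF h0 s0])
  have "degree (map_poly \<chi>0 H) = d"
  proof (rule antisym)
    show "degree (map_poly \<chi>0 H) \<le> d" using Hd by (intro degree_le) (simp add: coeff_map_poly h00 coeff_eq_0)
    show "d \<le> degree (map_poly \<chi>0 H)" using a0 by (intro le_degree) (simp add: coeff_map_poly h00)
  qed
  then show ?thesis using alg degree_min_pos unfolding alg_closed_field_def by auto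
qed

lemma uniform_pseudo_division:
  assumes q: "poly_over A0 q"
  shows "\<exists>E Q R. \<forall>i<d. poly_over A0 (Q i) \<and> poly_over A0 (R i) \<and> degree (R i) < d \<and>
           Polynomial.smult (a ^ E) (monom 1 i * q) = Q i * H + R i"
proof -
  have "\<forall>i. \<exists>e Q R. poly_over A0 Q \<and> poly_over A0 R \<and>
           Polynomial.smult (a ^ e) (monom 1 i * q) = Q * H + R \<and> degree R < d"
    using pseudo_division[OF poly_over_mult[OF s0 poly_over_monom[OF s0 subringD(1)[OF s0]] q]] by blast
  then obtain e Q R where QR: "\<And>i. poly_over A0 (Q i)" "\<And>i. poly_over A0 (R i)"
    "\<And>i. Polynomial.smult (a ^ e i) (monom 1 i * q) = Q i * H + R i" "\<And>i. degree (R i) < d"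
    by metis
  define E where "E = (\<Sum>i<d. e i)"
  define R' where "R' i = Polynomial.smult (a ^ (E - e i)) (R i)" for i
  define Q' where "Q' i = Polynomial.smult (a ^ (E - e i)) (Q i)" for i
  have aE: "a ^ k \<in> A0" for k by (rule subring_power[OF s0 lead_in_A0])
  have "poly_over A0 (Q' i)" "poly_over A0 (R' i)" "degree (R' i) < d" for i
    unfolding Q'_def R'_def using poly_over_smult[OF s0 aE] QR(1,2) QR(4)[of i]
    by (auto intro: le_less_trans[OF degree_smult_le])
  moreover have "Polynomial.smult (a ^ E) (monom 1 i * q) = Q' i * H + R' i" if "i < d" for i
  proof -
    have "e i \<le> E" unfolding E_def using that by (intro member_le_sum) auto
    then have "Polynomial.smult (a ^ E) (monom 1 i * q) =
        Polynomial.smult (a ^ (E - e i)) (Polynomial.smult (a ^ e i) (monom 1 i * q))"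
      by (simp add: power_add[symmetric])
    also have "\<dots> = Q' i * H + R' i" unfolding QR(3) Q'_def R'_def by (simp add: smult_add_right)
    finally show ?thesis .
  qed
  ultimately show ?thesis by blast
qed

text \<open>Modulo \<open>P1\<close>, multiplication by \<open>a ^ E * \<alpha>\<close> maps the span of \<open>1, g, \<dots>, g ^ (d - 1)\<close>
  over \<open>A0\<close> into itself with matrix \<open>M\<close>; by the determinant trick it is a root of the
  characteristic polynomial of \<open>M\<close> modulo \<open>P1\<close>.\<close>

lemma lead_power_mult_integral:
  assumes \<alpha>: "\<alpha> \<in> A1"
  shows "\<exists>E cp. poly_over A0 cp \<and> degree cp = d \<and> coeff cp d = 1 \<and> poly cp (a ^ E * \<alpha>) \<in> P1"
proof -
  obtain q where q: "poly_over A0 q" "\<alpha> = poly q g" using \<alpha> unfolding A1 by auto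
  obtain E Q R where QR: "\<And>i. i < d \<Longrightarrow> poly_over A0 (Q i)" "\<And>i. i < d \<Longrightarrow> poly_over A0 (R i)"
    "\<And>i. i < d \<Longrightarrow> degree (R i) < d"
    "\<And>i. i < d \<Longrightarrow> Polynomial.smult (a ^ E) (monom 1 i * q) = Q i * H + R i"
    using uniform_pseudo_division[OF q(1)] by metis
  define t where "t = a ^ E * \<alpha>"
  define M where "M = mat d d (\<lambda>(i,j). coeff (R i) j)"
  have tA: "t \<in> A1"
    unfolding t_def using subring_power[OF s1] A0_subset_A1 lead_in_A0 \<alpha> s1 by (auto simp: subringD)
  have M: "M \<in> carrier_mat d d" unfolding M_def by simp
  have MA: "M $$ (i,j) \<in> A0" if "i < d" "j < d" for i j
    unfolding M_def using that QR(2) by (simp add: poly_over_def)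
  have W: "t * g ^ i - (\<Sum>j<d. M $$ (i,j) * g ^ j) \<in> P1" if i: "i < d" for i
  proof -
    have "a ^ E * (g ^ i * poly q g) = poly (Q i) g * poly H g + poly (R i) g"
      using arg_cong[OF QR(4)[OF i], of "\<lambda>p. poly p g"] by (simp add: poly_monom)
    moreover have "poly (R i) g = (\<Sum>j<d. M $$ (i,j) * g ^ j)"
      unfolding poly_sum_lt[OF QR(3)[OF i]] M_def using i by (intro sum.cong) auto
    ultimately have "t * g ^ i - (\<Sum>j<d. M $$ (i,j) * g ^ j) = poly (Q i) g * poly H g"
      unfolding t_def q(2) by (simp add: algebra_simps)
    also have "\<dots> \<in> P1" by (rule ideal_inD(4)[OF ideal_P1 s1 poly_g_in_A1[OF QR(1)[OF i]] HP])
    finally show ?thesis .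
  qed
  define N where "N = map_mat (\<lambda>p. poly p t) (char_poly_matrix M)"
  have "comm_ring_hom (\<lambda>p. poly p t)" by unfold_locales auto
  then have detN: "det N = poly (char_poly M) t"
    unfolding N_def char_poly_def by (rule comm_ring_hom.hom_det)
  have N: "N \<in> carrier_mat d d" unfolding N_def using M by simp
  have Nij: "N $$ (i,j) = (if i = j then t else 0) - M $$ (i,j)" if "i < d" "j < d" for i j
    unfolding N_def char_poly_matrix_def using that M by auto
  define v where "v = vec d (\<lambda>j. g ^ j)"
  have "det N \<in> P1"
  proof (rule det_in_ideal_if_kills_vector[OF s1 ideal_P1 degree_min_pos N])
    show "N $$ (i,j) \<in> A1" if "i < d" "j < d" for i j
      using Nij[OF that] MA[OF that] A0_subset_A1 tA subringD(1,2,5,6)[OF s1] by auto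
    show "v \<in> carrier_vec d" "v $ 0 = 1" unfolding v_def using degree_min_pos by auto
    show "(N *\<^sub>v v) $ k \<in> P1" if k: "k < d" for k
    proof -
      have "(N *\<^sub>v v) $ k = (\<Sum>j<d. (if k = j then t else 0) * g ^ j - M $$ (k,j) * g ^ j)"
        using k N by (auto simp: v_def scalar_prod_def lessThan_atLeast0 Nij algebra_simps intro!: sum.cong)
      also have "\<dots> = t * g ^ k - (\<Sum>j<d. M $$ (k,j) * g ^ j)"
        by (simp add: sum_subtractf sum_delta_mult[OF k])
      finally show ?thesis using W[OF k] by simp
    qed
  qed
  moreover have "poly_over A0 (char_poly M)" by (rule char_poly_poly_over[OF s0 M MA])
  ultimately show ?thesis
    using degree_monic_char_poly[OF M] detN unfolding t_def by auto
qed

lemma algebraic_relation: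
  assumes \<alpha>: "\<alpha> \<in> A1"
  shows "\<exists>b. poly_over A0 b \<and> poly b \<alpha> \<in> P1 \<and> \<not> poly_over P0 b"
proof -
  obtain E cp where cp: "poly_over A0 cp" "degree cp = d" "coeff cp d = 1" "poly cp (a ^ E * \<alpha>) \<in> P1"
    using lead_power_mult_integral[OF \<alpha>] by blast
  define b where "b = (\<Sum>k\<le>d. monom (coeff cp k * a ^ (E * k)) k)"
  have "poly_over A0 b" unfolding b_def
    by (rule subring_sum[OF is_subring_poly_over[OF s0], simplified], rule poly_over_monom[OF s0])
      (use cp(1) s0 lead_in_A0 in \<open>auto simp: poly_over_def subringD subring_power\<close>)
  moreover have "poly b \<alpha> = poly cp (a ^ E * \<alpha>)"
  proof -
    have "poly b \<alpha> = (\<Sum>k\<le>d. coeff cp k * (a ^ E * \<alpha>) ^ k)"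
      unfolding b_def by (simp add: poly_sum poly_monom power_mult_distrib power_mult mult.assoc)
    then show ?thesis using cp(2) by (simp add: poly_altdef)
  qed
  moreover have "\<not> poly_over P0 b"
  proof
    assume "poly_over P0 b"
    moreover have "coeff b d = a ^ (E * d)"
      unfolding b_def using cp(3) by (simp add: coeff_sum coeff_monom)
    ultimately have "a ^ (E * d) \<in> P0" unfolding poly_over_def by metis
    moreover have "a ^ n \<notin> P0" for n
    proof (induction n)
      case 0 then show ?case using prime_idealD(2)[OF P0_prime] by simp
    next
      case (Suc n) then show ?case
        using prime_idealD(4)[OF P0_prime s0 lead_in_A0 subring_power[OF s0 lead_in_A0] lead_not_in_P0] by simp
    qed
    ultimately show False by blast
  qed
  ultimately show ?thesis using cp(4) by auto
qed

end

context simple_extension begin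

lemma minimal_relation_exists:
  assumes "\<exists>p. poly_over A0 p \<and> poly p g \<in> P1 \<and> \<not> poly_over P0 p"
  obtains H d where "minimal_relation A0 A1 g P1 phi H d"
proof -
  define S where "S = {p. poly_over A0 p \<and> poly p g \<in> P1 \<and> \<not> poly_over P0 p}"
  define d where "d = (LEAST n. \<exists>p\<in>S. degree p = n)"
  have ex: "\<exists>n. \<exists>p\<in>S. degree p = n" using assms unfolding S_def by blast
  obtain H where H: "H \<in> S" "degree H = d" using LeastI_ex[OF ex] unfolding d_def by blast
  have "poly_over P0 p" if "poly_over A0 p" "poly p g \<in> P1" "degree p < d" for p
  proof (rule ccontr)
    assume "\<not> poly_over P0 p"
    then have "p \<in> S" using that unfolding S_def by blast
    then have "d \<le> degree p" unfolding d_def by (auto intro: Least_le)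
    then show False using that(3) by simp
  qed
  then have "minimal_relation A0 A1 g P1 phi H d"
    unfolding minimal_relation_def minimal_relation_axioms_def
    using simple_extension_axioms H unfolding S_def by auto
  then show ?thesis by (rule that)
qed

text \<open>Some multiple \<open>\<alpha> u\<close> is congruent modulo \<open>P1\<close> to an element \<open>c \<in> A0 - P0\<close>. A point of
  \<open>A0/P0\<close> not vanishing at \<open>c\<close> and at the leading coefficient of a minimal relation \<open>H\<close> of \<open>g\<close>
  extends to \<open>A1/P1\<close> by sending \<open>g\<close> to a root of the image of \<open>H\<close>; it cannot kill \<open>\<alpha>\<close>.\<close>

lemma separating_point_algebraic:
  assumes alg: "alg_closed_field TYPE('k)"
    and IH: "\<And>\<alpha>0. \<alpha>0 \<in> A0 \<Longrightarrow> \<alpha>0 \<notin> P0 \<Longrightarrow> separating_point phi A0 P0 \<alpha>0"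
    and nT: "\<exists>p. poly_over A0 p \<and> poly p g \<in> P1 \<and> \<not> poly_over P0 p"
    and \<alpha>: "\<alpha> \<in> A1" "\<alpha> \<notin> P1"
  shows "separating_point phi A1 P1 \<alpha>"
proof -
  obtain H d where "minimal_relation A0 A1 g P1 phi H d" using minimal_relation_exists[OF nT] .
  then interpret A: minimal_relation A0 A1 g P1 phi H d .
  obtain b where b: "poly_over A0 b" "poly b \<alpha> \<in> P1" "\<not> poly_over P0 b" using A.algebraic_relation[OF \<alpha>(1)] by blast
  obtain c u where cu: "c \<in> A0" "c \<notin> P0" "u \<in> A1" "c - \<alpha> * u \<in> P1"
    using divides_base_element_mod_P1[OF \<alpha> b] by blast
  have acA: "A.a * c \<in> A0" using A.lead_in_A0 cu(1) s0 by (simp add: subringD)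
  have acP: "A.a * c \<notin> P0" using prime_idealD(4)[OF P0_prime s0 A.lead_in_A0 cu(1) A.lead_not_in_P0 cu(2)] .
  obtain \<chi>0 where \<chi>0: "hom_on A0 \<chi>0" "\<And>c. \<chi>0 (phi c) = c" "\<And>x. x \<in> P0 \<Longrightarrow> \<chi>0 x = 0" "\<chi>0 (A.a * c) \<noteq> 0"
    using IH[OF acA acP] unfolding separating_point_def by blast
  have a0: "\<chi>0 A.a \<noteq> 0" and c0': "\<chi>0 c \<noteq> 0" using \<chi>0(4) hom_onD(4)[OF \<chi>0(1) s0 A.lead_in_A0 cu(1)] by auto
  obtain c0 where c0: "poly (map_poly \<chi>0 H) c0 = 0" using A.mapped_min_poly_has_root[OF alg \<chi>0(1) a0] by blast
  have vanish: "poly (map_poly \<chi>0 p) c0 = 0" if "poly_over A0 p" "poly p g \<in> P1" for p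
    by (rule A.relations_vanish_at_root[OF \<chi>0(1) \<chi>0(3) a0 c0 that])
  obtain \<chi> where \<chi>: "hom_on A1 \<chi>" "\<forall>c. \<chi> (phi c) = c" "\<forall>x\<in>P1. \<chi> x = 0"
      "\<forall>p. poly_over A0 p \<longrightarrow> \<chi> (poly p g) = poly (map_poly \<chi>0 p) c0"
    using extend_hom[OF \<chi>0(1,2) vanish] by blast
  have "\<chi> (poly [:c:] g) = poly (map_poly \<chi>0 [:c:]) c0" using \<chi>(4) poly_over_const[OF s0 cu(1)] by blast
  then have "\<chi> c = \<chi>0 c" using map_poly_const_on[OF \<chi>0(1) s0, of c] by simp
  then have "\<chi> c \<noteq> 0" using c0' by simp
  moreover have "\<chi> c = \<chi> \<alpha> * \<chi> u"
  proof -
    have cA1: "c \<in> A1" using cu(1) A0_subset_A1 by blast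
    have auA: "\<alpha> * u \<in> A1" using \<alpha>(1) cu(3) s1 by (simp add: subringD)
    have dA: "c - \<alpha> * u \<in> A1" using cA1 auA s1 by (simp add: subringD)
    have "\<chi> c = \<chi> (\<alpha> * u + (c - \<alpha> * u))" by simp
    also have "\<dots> = \<chi> (\<alpha> * u) + \<chi> (c - \<alpha> * u)" by (rule hom_onD(3)[OF \<chi>(1) s1 auA dA])
    also have "\<chi> (c - \<alpha> * u) = 0" using \<chi>(3) cu(4) by blast
    also have "\<chi> (\<alpha> * u) = \<chi> \<alpha> * \<chi> u" by (rule hom_onD(4)[OF \<chi>(1) s1 \<alpha>(1) cu(3)])
    finally show ?thesis by simp
  qed
  ultimately have "\<chi> \<alpha> \<noteq> 0" by auto
  then show ?thesis unfolding separating_point_def using \<chi> by blast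
qed

end

lemma is_subring_range: "is_ring_hom phi \<Longrightarrow> is_subring (range phi)"
proof -
  assume phi: "is_ring_hom phi"
  have "1 \<in> range phi" using ring_homD(1)[OF phi] by (metis rangeI)
  moreover have "x + y \<in> range phi" "x * y \<in> range phi" if xyr: "x \<in> range phi" "y \<in> range phi" for x y
  proof -
    obtain c1 c2 where xy: "x = phi c1" "y = phi c2" using xyr by blast
    show "x + y \<in> range phi" "x * y \<in> range phi" unfolding xy ring_homD(3,4)[OF phi, symmetric] by simp_all
  qed
  moreover have "- x \<in> range phi" if xr: "x \<in> range phi" for x
  proof -
    obtain c where c: "x = phi c" using xr by blast
    have "- x = phi (- c)" unfolding c ring_homD(5)[OF phi] ..
    then show ?thesis by simp
  qed
  ultimately show ?thesis unfolding is_subring_def by blast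
qed

lemma separating_point_range:
  fixes phi :: "'k::field \<Rightarrow> 'a::comm_ring_1"
  assumes phi: "is_ring_hom phi" and P: "prime_ideal_in (range phi) P"
    and \<alpha>: "\<alpha> \<in> range phi" "\<alpha> \<notin> P"
  shows "separating_point phi (range phi) P \<alpha>"
proof -
  have sr: "is_subring (range phi)" by (rule is_subring_range[OF phi])
  have Pi: "ideal_in (range phi) P" using prime_idealD(1)[OF P] .
  have zero: "(0::'a) \<in> P" using ideal_inD(2)[OF Pi sr] .
  have unit: "c = 0" if "phi c \<in> P" for c
  proof (rule ccontr)
    assume "c \<noteq> 0"
    then have "phi (inverse c * c) \<in> P"
      using ideal_inD(4)[OF Pi sr _ that] ring_homD(4)[OF phi] by (metis rangeI)
    then show False using \<open>c \<noteq> 0\<close> prime_idealD(2)[OF P] ring_homD(1)[OF phi] by simp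
  qed
  have "inj phi"
  proof (rule injI)
    fix x y assume "phi x = phi y"
    then have "phi (x - y) \<in> P" using ring_homD(6)[OF phi] zero by simp
    then have "x - y = 0" by (rule unit)
    then show "x = y" by simp
  qed
  define \<chi> where "\<chi> = inv_into UNIV phi"
  have \<chi>phi: "\<chi> (phi c) = c" for c unfolding \<chi>_def using \<open>inj phi\<close> by simp
  have "hom_on (range phi) \<chi>"
    unfolding hom_on_def
  proof (intro conjI ballI)
    show "\<chi> 1 = 1" using \<chi>phi[of 1] ring_homD(1)[OF phi] by simp
  next
    fix x y assume "x \<in> range phi" "y \<in> range phi"
    then obtain c1 c2 where xy: "x = phi c1" "y = phi c2" by blast
    have "x + y = phi (c1 + c2)" "x * y = phi (c1 * c2)" unfolding xy ring_homD(3,4)[OF phi] by simp_all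
    then show "\<chi> (x + y) = \<chi> x + \<chi> y" "\<chi> (x * y) = \<chi> x * \<chi> y"
      unfolding xy by (simp_all only: \<chi>phi)
  qed
  moreover have "\<chi> x = 0" if "x \<in> P" for x
    using that ideal_inD(1)[OF Pi sr] unit \<chi>phi by auto
  moreover have "\<chi> \<alpha> \<noteq> 0"
    using \<alpha> zero ring_homD(2)[OF phi] \<chi>phi by auto
  ultimately show ?thesis unfolding separating_point_def using \<chi>phi by blast
qed

theorem weak_nullstellensatz:
  fixes phi :: "'k::field \<Rightarrow> 'a::comm_ring_1"
  assumes alg: "alg_closed_field TYPE('k)" and phi: "is_ring_hom phi" and fin: "finite G"
    and P: "prime_ideal_in (gen_subring (range phi \<union> G)) P"
    and \<alpha>: "\<alpha> \<in> gen_subring (range phi \<union> G)" "\<alpha> \<notin> P"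
  shows "separating_point phi (gen_subring (range phi \<union> G)) P \<alpha>"
  using fin P \<alpha>
proof (induction G arbitrary: P \<alpha> rule: finite_induct)
  case empty
  have "gen_subring (range phi) = range phi"
    using gen_subring_least[OF is_subring_range[OF phi], of "range phi"] gen_subring_base[of "range phi"]
    by auto
  then show ?case using separating_point_range[OF phi] empty.prems by simp
next
  case (insert g G)
  let ?A0 = "gen_subring (range phi \<union> G)"
  let ?A1 = "gen_subring (range phi \<union> insert g G)"
  have s0: "is_subring ?A0" by (rule is_subring_gen_subring)
  have "?A1 = gen_subring (insert g (range phi \<union> G))" by simp
  also have "\<dots> = {poly p g | p. poly_over ?A0 p}" by (rule gen_subring_insert_eq_poly[OF s0 refl])
  finally have A1: "?A1 = {poly p g | p. poly_over ?A0 p}" .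
  have "range phi \<subseteq> ?A0" using gen_subring_base[of "range phi \<union> G"] by blast
  then interpret E: simple_extension ?A0 ?A1 g P phi
    using s0 is_subring_gen_subring A1 insert.prems(1) phi by unfold_locales
  have IH: "separating_point phi ?A0 E.P0 \<alpha>0" if "\<alpha>0 \<in> ?A0" "\<alpha>0 \<notin> E.P0" for \<alpha>0
    using insert.IH[OF E.P0_prime that] .
  show ?case
  proof (cases "\<exists>p. poly_over ?A0 p \<and> poly p g \<in> P \<and> \<not> poly_over E.P0 p")
    case True
    from E.separating_point_algebraic[OF alg IH True insert.prems(2,3)] show ?thesis .
  next
    case False
    then have "poly_over E.P0 p" if "poly_over ?A0 p" "poly p g \<in> P" for p
      using that by blast
    from E.separating_point_transcendental[OF IH this alg_closed_field_infinite[OF alg] insert.prems(2,3)]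
    show ?thesis .
  qed
qed

section \<open>Polynomial rings over \<open>R\<close> and the prime extension property\<close>

lemma hom_image_gen_subring:
  assumes "is_ring_hom h" "x \<in> gen_subring X"
  shows "h x \<in> gen_subring (h ` X)"
  using assms(2)
proof (induction rule: gen_subring.induct)
  case (base x) then show ?case by (auto intro: gen_subring.base)
next
  case one then show ?case using ring_homD(1)[OF assms(1)] by (auto intro: gen_subring.one)
next
  case (add x y) then show ?case using ring_homD(3)[OF assms(1)] by (auto intro: gen_subring.add)
next
  case (neg x) then show ?case using ring_homD(5)[OF assms(1)] by (auto intro: gen_subring.neg)
next
  case (mult x y) then show ?case using ring_homD(4)[OF assms(1)] by (auto intro: gen_subring.mult)
qed

lemma is_ring_hom_single0: "is_ring_hom (Poly_Mapping.single 0 :: 'a::comm_ring_1 \<Rightarrow> (nat \<Rightarrow>\<^sub>0 nat) \<Rightarrow>\<^sub>0 'a)"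
  unfolding is_ring_hom_def by (simp add: single_add mult_single)

lemma lookup_mult_single0: "Poly_Mapping.lookup (p * Poly_Mapping.single 0 c) \<mu> = Poly_Mapping.lookup p \<mu> * c"
  for p :: "(nat \<Rightarrow>\<^sub>0 nat) \<Rightarrow>\<^sub>0 'a::comm_ring_1"
proof -
  have "p * Poly_Mapping.single 0 c = Poly_Mapping.single 0 c * p"
    by (rule mult.commute)
  also have "\<dots> = Poly_Mapping.map ((*) c) p"
    by (rule mult_map_scale_conv_mult[symmetric])
  finally have "Poly_Mapping.lookup (p * Poly_Mapping.single 0 c) \<mu> = (c * Poly_Mapping.lookup p \<mu> when Poly_Mapping.lookup p \<mu> \<noteq> 0)"
    by (simp only: map.rep_eq)
  also have "\<dots> = Poly_Mapping.lookup p \<mu> * c" by (simp add: when_def mult.commute)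
  finally show ?thesis .
qed

lemma keys_map_subset: "Poly_Mapping.keys (Poly_Mapping.map f p) \<subseteq> Poly_Mapping.keys p"
  by (auto simp: in_keys_iff map.rep_eq when_def)

lemma map_polys_in: "p \<in> polys_in n \<Longrightarrow> Poly_Mapping.map f p \<in> polys_in n"
  using keys_map_subset[of f p] unfolding polys_in_def by blast

lemma polys_in_eq_gen_subring:
  fixes phi :: "'k::field \<Rightarrow> 'r::comm_ring_1"
  assumes phi: "is_ring_hom phi" and G: "gen_subring (range phi \<union> G) = UNIV"
  shows "(polys_in n :: ((nat \<Rightarrow>\<^sub>0 nat) \<Rightarrow>\<^sub>0 'r) set) =
     gen_subring (range (Poly_Mapping.single 0 \<circ> phi) \<union> (Poly_Mapping.single 0 ` G \<union> mvar ` {..<n}))"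
    (is "?L = gen_subring ?X")
proof
  show "gen_subring ?X \<subseteq> ?L"
    by (rule gen_subring_least[OF is_subring_polys_in]) (auto simp: single0_in_polys_in mvar_in_polys_in mvar_in_polys_in[simplified])
  show "?L \<subseteq> gen_subring ?X"
  proof
    fix p :: "(nat \<Rightarrow>\<^sub>0 nat) \<Rightarrow>\<^sub>0 'r" assume p: "p \<in> ?L"
    have s: "is_subring (gen_subring ?X)" by (rule is_subring_gen_subring)
    have c: "Poly_Mapping.single 0 c \<in> gen_subring ?X" for c :: 'r
    proof -
      have "c \<in> gen_subring (range phi \<union> G)" using G by simp
      then have "(Poly_Mapping.single 0 c :: (nat \<Rightarrow>\<^sub>0 nat) \<Rightarrow>\<^sub>0 'r) \<in> gen_subring (Poly_Mapping.single 0 ` (range phi \<union> G))"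
        by (rule hom_image_gen_subring[OF is_ring_hom_single0])
      moreover have "(Poly_Mapping.single 0 ` (range phi \<union> G) :: ((nat \<Rightarrow>\<^sub>0 nat) \<Rightarrow>\<^sub>0 'r) set) \<subseteq> ?X" by auto
      ultimately show ?thesis using gen_subring_mono by blast
    qed
    have x: "mvar i \<in> gen_subring ?X" if "i < n" for i
      using that by (auto intro: gen_subring.base)
    have "p = (\<Sum>\<mu>\<in>Poly_Mapping.keys p. Poly_Mapping.single 0 (Poly_Mapping.lookup p \<mu>) *
               (\<Prod>i\<in>Poly_Mapping.keys \<mu>. mvar i ^ Poly_Mapping.lookup \<mu> i))"
      by (subst poly_mapping_sum_single) (rule sum.cong[OF refl], rule single_eq_const_mult_vars)
    also have "\<dots> \<in> gen_subring ?X"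
    proof (rule subring_sum[OF s])
      fix \<mu> assume mu: "\<mu> \<in> Poly_Mapping.keys p"
      show "Poly_Mapping.single 0 (Poly_Mapping.lookup p \<mu>) * (\<Prod>i\<in>Poly_Mapping.keys \<mu>. mvar i ^ Poly_Mapping.lookup \<mu> i) \<in> gen_subring ?X"
      proof (rule subringD(4)[OF s c subring_prod[OF s]])
        fix i assume "i \<in> Poly_Mapping.keys \<mu>"
        then have "i < n" using p mu unfolding polys_in_def by auto
        then show "mvar i ^ Poly_Mapping.lookup \<mu> i \<in> gen_subring ?X" by (rule subring_power[OF s x])
      qed
    qed
    finally show "p \<in> gen_subring ?X" .
  qed
qed

lemma (in free_module) coeffwise_basis_decomposition:
  fixes a :: "(nat \<Rightarrow>\<^sub>0 nat) \<Rightarrow>\<^sub>0 's"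
  assumes "a \<in> polys_in n"
  shows "\<exists>F qa. finite F \<and> F \<subseteq> Bs \<and> (\<forall>\<beta>. qa \<beta> \<in> polys_in n) \<and>
            a = (\<Sum>\<beta>\<in>F. Poly_Mapping.map f (qa \<beta>) * Poly_Mapping.single 0 \<beta>)"
proof -
  define qa where "qa \<beta> = (\<Sum>\<mu>\<in>Poly_Mapping.keys a. Poly_Mapping.single \<mu> (coord (Poly_Mapping.lookup a \<mu>) \<beta>))" for \<beta>
  define F where "F = (\<Union>\<mu>\<in>Poly_Mapping.keys a. {\<beta>. coord (Poly_Mapping.lookup a \<mu>) \<beta> \<noteq> 0})"
  have F: "finite F" unfolding F_def using finite_coord_support by auto
  have FB: "F \<subseteq> Bs" unfolding F_def using coord_outside_basis by blast
  have lq: "Poly_Mapping.lookup (qa \<beta>) \<mu> = (if \<mu> \<in> Poly_Mapping.keys a then coord (Poly_Mapping.lookup a \<mu>) \<beta> else 0)" for \<beta> \<mu>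
    unfolding qa_def by (simp add: lookup_sum lookup_single when_def)
  have kq: "Poly_Mapping.keys (qa \<beta>) \<subseteq> Poly_Mapping.keys a" for \<beta>
    using lq by (auto simp: in_keys_iff split: if_splits)
  have qp: "qa \<beta> \<in> polys_in n" for \<beta>
    using assms kq[of \<beta>] unfolding polys_in_def by blast
  have f0: "f 0 = 0" by (rule ring_homD(2)[OF hom])
  have lm: "Poly_Mapping.lookup (Poly_Mapping.map f p) \<mu> = f (Poly_Mapping.lookup p \<mu>)" for p :: "(nat \<Rightarrow>\<^sub>0 nat) \<Rightarrow>\<^sub>0 'r" and \<mu>
    using f0 by (auto simp: map.rep_eq when_def)
  have "a = (\<Sum>\<beta>\<in>F. Poly_Mapping.map f (qa \<beta>) * Poly_Mapping.single 0 \<beta>)"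
  proof (rule poly_mapping_eqI)
    fix \<mu>
    show "Poly_Mapping.lookup a \<mu> = Poly_Mapping.lookup (\<Sum>\<beta>\<in>F. Poly_Mapping.map f (qa \<beta>) * Poly_Mapping.single 0 \<beta>) \<mu>"
    proof (cases "\<mu> \<in> Poly_Mapping.keys a")
      case True
      have "Poly_Mapping.lookup (\<Sum>\<beta>\<in>F. Poly_Mapping.map f (qa \<beta>) * Poly_Mapping.single 0 \<beta>) \<mu>
            = (\<Sum>\<beta>\<in>F. f (coord (Poly_Mapping.lookup a \<mu>) \<beta>) * \<beta>)"
        using True by (simp add: lookup_sum lookup_mult_single0 lm lq)
      also have "\<dots> = Poly_Mapping.lookup a \<mu>"
        by (rule basis_repr_sum[OF hom coord_repr F, symmetric]) (use True in \<open>auto simp: F_def\<close>)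
      finally show ?thesis by simp
    next
      case False
      then show ?thesis by (simp add: lookup_sum lookup_mult_single0 lm lq f0 in_keys_iff)
    qed
  qed
  then show ?thesis using F FB qp by blast
qed

lemma (in free_module) eval_mpoly_basis_sum:
  fixes a :: "(nat \<Rightarrow>\<^sub>0 nat) \<Rightarrow>\<^sub>0 's"
  assumes "a = (\<Sum>\<beta>\<in>F. Poly_Mapping.map f (qa \<beta>) * Poly_Mapping.single 0 \<beta>)"
  shows "eval_mpoly (f \<circ> z) a = (\<Sum>\<beta>\<in>F. f (eval_mpoly z (qa \<beta>)) * \<beta>)"
  unfolding assms by (simp add: eval_mpoly_sum eval_mpoly_mult eval_mpoly_map[OF hom] eval_mpoly_single)

lemma is_ring_hom_on_constants:
  assumes hom: "hom_on (polys_in n) \<chi>"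
  shows "is_ring_hom (\<lambda>r. \<chi> (Poly_Mapping.single 0 r))"
proof -
  have s: "is_subring (polys_in n)" by (rule is_subring_polys_in)
  show ?thesis
    unfolding is_ring_hom_def
    using hom_onD(1)[OF hom s] hom_onD(3,4)[OF hom s single0_in_polys_in single0_in_polys_in]
    by (simp add: single_add mult_single)
qed

lemma hom_on_polys_in_eq_eval:
  fixes \<chi> :: "((nat \<Rightarrow>\<^sub>0 nat) \<Rightarrow>\<^sub>0 'r::comm_ring_1) \<Rightarrow> 'b::comm_ring_1"
  assumes hom: "hom_on (polys_in n) \<chi>" and q: "q \<in> polys_in n"
  shows "\<chi> q = eval_mpoly (\<lambda>i. \<chi> (mvar i)) (Poly_Mapping.map (\<lambda>r. \<chi> (Poly_Mapping.single 0 r)) q)"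
proof -
  define \<psi> where "\<psi> r = \<chi> (Poly_Mapping.single 0 r)" for r
  have s: "is_subring (polys_in n :: ((nat \<Rightarrow>\<^sub>0 nat) \<Rightarrow>\<^sub>0 'r) set)" by (rule is_subring_polys_in)
  have vars: "(\<Prod>i\<in>Poly_Mapping.keys \<mu>. mvar i ^ Poly_Mapping.lookup \<mu> i) \<in> (polys_in n :: ((nat \<Rightarrow>\<^sub>0 nat) \<Rightarrow>\<^sub>0 'r) set)"
    "\<chi> (\<Prod>i\<in>Poly_Mapping.keys \<mu>. mvar i ^ Poly_Mapping.lookup \<mu> i) = eval_monomial (\<lambda>i. \<chi> (mvar i)) \<mu>"
    if "\<mu> \<in> Poly_Mapping.keys q" for \<mu>
  proof -
    have mv: "(mvar i :: (nat \<Rightarrow>\<^sub>0 nat) \<Rightarrow>\<^sub>0 'r) \<in> polys_in n" if "i \<in> Poly_Mapping.keys \<mu>" for i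
    proof -
      have "i < n" using q \<open>\<mu> \<in> Poly_Mapping.keys q\<close> that unfolding polys_in_def by blast
      then show ?thesis by (rule mvar_in_polys_in)
    qed
    have pw: "(mvar i :: (nat \<Rightarrow>\<^sub>0 nat) \<Rightarrow>\<^sub>0 'r) ^ Poly_Mapping.lookup \<mu> i \<in> polys_in n" if "i \<in> Poly_Mapping.keys \<mu>" for i
      by (rule subring_power[OF s mv[OF that]])
    show "(\<Prod>i\<in>Poly_Mapping.keys \<mu>. mvar i ^ Poly_Mapping.lookup \<mu> i) \<in> (polys_in n :: ((nat \<Rightarrow>\<^sub>0 nat) \<Rightarrow>\<^sub>0 'r) set)"
      by (rule subring_prod[OF s pw])
    have "\<chi> (\<Prod>i\<in>Poly_Mapping.keys \<mu>. mvar i ^ Poly_Mapping.lookup \<mu> i) =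
        (\<Prod>i\<in>Poly_Mapping.keys \<mu>. \<chi> (mvar i ^ Poly_Mapping.lookup \<mu> i))"
      by (rule hom_on_prod[OF hom s pw])
    also have "\<dots> = (\<Prod>i\<in>Poly_Mapping.keys \<mu>. \<chi> (mvar i) ^ Poly_Mapping.lookup \<mu> i)"
      by (rule prod.cong[OF refl], rule hom_on_power[OF hom s mv])
    finally show "\<chi> (\<Prod>i\<in>Poly_Mapping.keys \<mu>. mvar i ^ Poly_Mapping.lookup \<mu> i) =
        eval_monomial (\<lambda>i. \<chi> (mvar i)) \<mu>"
      unfolding eval_monomial_def .
  qed
  have "\<chi> q = \<chi> (\<Sum>\<mu>\<in>Poly_Mapping.keys q. Poly_Mapping.single 0 (Poly_Mapping.lookup q \<mu>) *
               (\<Prod>i\<in>Poly_Mapping.keys \<mu>. mvar i ^ Poly_Mapping.lookup \<mu> i))"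
    by (subst poly_mapping_sum_single)
      (rule arg_cong[where f = \<chi>], rule sum.cong[OF refl], rule single_eq_const_mult_vars)
  also have "\<dots> = (\<Sum>\<mu>\<in>Poly_Mapping.keys q. \<psi> (Poly_Mapping.lookup q \<mu>) * eval_monomial (\<lambda>i. \<chi> (mvar i)) \<mu>)"
    unfolding \<psi>_def using vars
    by (simp add: hom_on_sum[OF hom s] hom_onD(4)[OF hom s] subringD(4)[OF s] single0_in_polys_in)
  also have "\<dots> = eval_mpoly (\<lambda>i. \<chi> (mvar i)) (Poly_Mapping.map \<psi> q)"
  proof -
    have "\<psi> 0 = 0" unfolding \<psi>_def using ring_homD(2)[OF is_ring_hom_on_constants[OF hom]] .
    then show ?thesis
      by (subst eval_mpoly_superset[of "Poly_Mapping.keys q"]) (auto simp: map.rep_eq when_def keys_map_subset intro!: sum.cong)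
  qed
  finally show ?thesis unfolding \<psi>_def .
qed

lemma hom_eq_at_evaluation_point:
  fixes \<chi> :: "((nat \<Rightarrow>\<^sub>0 nat) \<Rightarrow>\<^sub>0 'r::comm_ring_1) \<Rightarrow> 'k::comm_ring_1"
  assumes hom: "hom_on (polys_in n) \<chi>" and phic: "\<And>c. \<chi> (Poly_Mapping.single 0 (phi c)) = c"
    and q: "q \<in> polys_in n"
  shows "\<chi> (Poly_Mapping.single 0 (eval_mpoly (\<lambda>i. phi (\<chi> (mvar i))) q)) = \<chi> q"
proof -
  let ?\<psi> = "\<lambda>r. \<chi> (Poly_Mapping.single 0 r)"
  have "?\<psi> (eval_mpoly (\<lambda>i. phi (\<chi> (mvar i))) q) =
      eval_mpoly (?\<psi> \<circ> (\<lambda>i. phi (\<chi> (mvar i)))) (Poly_Mapping.map ?\<psi> q)"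
    by (rule eval_mpoly_map[OF is_ring_hom_on_constants[OF hom], symmetric])
  moreover have "?\<psi> \<circ> (\<lambda>i. phi (\<chi> (mvar i))) = (\<lambda>i. \<chi> (mvar i))"
    using phic by (simp add: comp_def)
  ultimately show ?thesis using hom_on_polys_in_eq_eval[OF hom q] by simp
qed

lemma maximal_ideal_kernel:
  fixes \<psi> :: "'r::comm_ring_1 \<Rightarrow> 'k::field"
  assumes \<psi>: "is_ring_hom \<psi>" and phi: "is_ring_hom phi" and \<psi>phi: "\<And>c. \<psi> (phi c) = c"
  shows "maximal_ideal_in UNIV {r. \<psi> r = 0}"
proof -
  let ?m = "{r. \<psi> r = 0}"
  have sU: "is_subring (UNIV :: 'r set)" unfolding is_subring_def by auto
  have "ideal_in UNIV ?m" unfolding ideal_in_def using ring_homD[OF \<psi>] by auto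
  moreover have "1 \<notin> ?m" using ring_homD(1)[OF \<psi>] by simp
  then have "?m \<noteq> UNIV" by blast
  moreover have "J = ?m \<or> J = UNIV" if J: "ideal_in UNIV J" "?m \<subseteq> J" for J
  proof (cases "J = ?m")
    case False
    then obtain x where x: "x \<in> J" "\<psi> x \<noteq> 0" using J by blast
    have "\<psi> (x - phi (\<psi> x)) = 0" using ring_homD(6)[OF \<psi>] \<psi>phi by simp
    then have "x - (x - phi (\<psi> x)) \<in> J" using J ideal_inD(7)[OF J(1) sU x(1)] by blast
    then have "phi (inverse (\<psi> x)) * phi (\<psi> x) \<in> J" using J(1) unfolding ideal_in_def by simp
    then have "1 \<in> J" using x(2) ring_homD(1,4)[OF phi] by (metis field_class.field_inverse)
    then have "r * 1 \<in> J" for r using J(1) unfolding ideal_in_def by blast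
    then show ?thesis by auto
  qed simp
  ultimately show ?thesis unfolding maximal_ideal_in_def by blast
qed

lemma separating_point_polys_in:
  fixes phi :: "'k::field \<Rightarrow> 'r::comm_ring_1"
  assumes alg: "alg_closed_field TYPE('k)" and phi: "is_ring_hom phi"
    and G: "finite G" "gen_subring (range phi \<union> G) = UNIV"
    and P: "prime_ideal_in (polys_in n) P" and \<alpha>: "\<alpha> \<in> polys_in n" "\<alpha> \<notin> P"
  obtains \<chi> where "hom_on (polys_in n) \<chi>" "\<And>c. \<chi> (Poly_Mapping.single 0 (phi c)) = c"
    "\<And>x. x \<in> P \<Longrightarrow> \<chi> x = 0" "\<chi> \<alpha> \<noteq> 0"
proof -
  have "is_ring_hom (Poly_Mapping.single 0 \<circ> phi :: 'k \<Rightarrow> (nat \<Rightarrow>\<^sub>0 nat) \<Rightarrow>\<^sub>0 'r)"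
    using phi is_ring_hom_single0 unfolding is_ring_hom_def by auto
  moreover have "finite (Poly_Mapping.single 0 ` G \<union> mvar ` {..<n} :: ((nat \<Rightarrow>\<^sub>0 nat) \<Rightarrow>\<^sub>0 'r) set)"
    using G(1) by simp
  ultimately have "separating_point (Poly_Mapping.single 0 \<circ> phi) (polys_in n) P \<alpha>"
    using weak_nullstellensatz[OF alg] P \<alpha> unfolding polys_in_eq_gen_subring[OF phi G(2)] by blast
  then show ?thesis using that unfolding separating_point_def by auto
qed

context free_module begin

lemma extension_mem_if_coeffs_mem:
  assumes P: "P \<subseteq> polys_in n" and q: "\<And>\<beta>. \<beta> \<in> F \<Longrightarrow> q \<beta> \<in> P"
  shows "(\<Sum>\<beta>\<in>F. Poly_Mapping.map f (q \<beta>) * Poly_Mapping.single 0 \<beta>)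
           \<in> ideal_gen_in (polys_in n) (Poly_Mapping.map f ` P)"
proof -
  have sub: "Poly_Mapping.map f ` P \<subseteq> polys_in n" using P map_polys_in by blast
  have I: "ideal_in (polys_in n) (ideal_gen_in (polys_in n) (Poly_Mapping.map f ` P))"
    by (rule ideal_gen_ideal[OF is_subring_polys_in sub])
  show ?thesis
    by (rule ideal_in_sum[OF I is_subring_polys_in], rule ideal_inD(5)[OF I is_subring_polys_in single0_in_polys_in])
      (use q ideal_gen_base[OF sub] in blast)
qed

lemma coordinate_outside_if_not_in_extension:
  assumes P: "P \<subseteq> polys_in n" and a: "a \<in> polys_in n"
    and a_notin: "a \<notin> ideal_gen_in (polys_in n) (Poly_Mapping.map f ` P)"
  obtains F q \<beta> where "finite F" "F \<subseteq> Bs" "\<And>\<beta>. q \<beta> \<in> polys_in n"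
    "a = (\<Sum>\<beta>\<in>F. Poly_Mapping.map f (q \<beta>) * Poly_Mapping.single 0 \<beta>)" "\<beta> \<in> F" "q \<beta> \<notin> P"
proof -
  obtain F q where F: "finite F" "F \<subseteq> Bs" "\<forall>\<beta>. q \<beta> \<in> polys_in n"
    "a = (\<Sum>\<beta>\<in>F. Poly_Mapping.map f (q \<beta>) * Poly_Mapping.single 0 \<beta>)"
    using coeffwise_basis_decomposition[OF a] by blast
  moreover obtain \<beta> where "\<beta> \<in> F" "q \<beta> \<notin> P"
    using extension_mem_if_coeffs_mem[OF P] F(4) a_notin by blast
  ultimately show ?thesis using that by blast
qed

lemma eval_extension_in_extended_kernel:
  fixes phi :: "'k::comm_ring_1 \<Rightarrow> 'r"
  assumes \<chi>: "hom_on (polys_in n) \<chi>" and phic: "\<And>c. \<chi> (Poly_Mapping.single 0 (phi c)) = c"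
    and P: "P \<subseteq> polys_in n" "\<And>x. x \<in> P \<Longrightarrow> \<chi> x = 0"
    and y: "y \<in> ideal_gen_in (polys_in n) (Poly_Mapping.map f ` P)"
  shows "eval_mpoly (f \<circ> (\<lambda>i. phi (\<chi> (mvar i)))) y
           \<in> ideal_gen_in UNIV (f ` {r. \<chi> (Poly_Mapping.single 0 r) = 0})"
proof -
  let ?z = "\<lambda>i. phi (\<chi> (mvar i))"
  let ?mS = "ideal_gen_in UNIV (f ` {r. \<chi> (Poly_Mapping.single 0 r) = 0})"
  have sU: "is_subring (UNIV :: 's set)" unfolding is_subring_def by auto
  have mS: "ideal_in UNIV ?mS" by (rule ideal_gen_ideal[OF sU]) simp
  define Q where "Q = {y \<in> polys_in n. eval_mpoly (f \<circ> ?z) y \<in> ?mS}"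
  have "ideal_in (polys_in n) Q"
    unfolding ideal_in_def Q_def
    using ideal_inD[OF mS sU] subringD[OF is_subring_polys_in]
    by (auto simp: eval_mpoly_add eval_mpoly_mult)
  moreover have "Poly_Mapping.map f ` P \<subseteq> Q"
  proof
    fix y assume "y \<in> Poly_Mapping.map f ` P"
    then obtain p where p: "p \<in> P" "y = Poly_Mapping.map f p" by auto
    have "\<chi> (Poly_Mapping.single 0 (eval_mpoly ?z p)) = 0"
      using hom_eq_at_evaluation_point[OF \<chi> phic] P p(1) by auto
    then have "f (eval_mpoly ?z p) \<in> f ` {r. \<chi> (Poly_Mapping.single 0 r) = 0}" by simp
    then have "f (eval_mpoly ?z p) \<in> ?mS"
      using ideal_gen_base[of "f ` {r. \<chi> (Poly_Mapping.single 0 r) = 0}" UNIV] by auto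
    moreover have "y \<in> polys_in n" using map_polys_in[of p n f] p P by auto
    ultimately show "y \<in> Q" unfolding Q_def using p(2) eval_mpoly_map[OF hom] by auto
  qed
  ultimately have "ideal_gen_in (polys_in n) (Poly_Mapping.map f ` P) \<subseteq> Q" by (rule ideal_gen_least)
  then show ?thesis using y unfolding Q_def by auto
qed

lemma coeff_vanishes_if_eval_in_extended_kernel:
  fixes phi :: "'k::field \<Rightarrow> 'r"
  assumes \<chi>: "hom_on (polys_in n) \<chi>" and phic: "\<And>c. \<chi> (Poly_Mapping.single 0 (phi c)) = c"
    and phi: "is_ring_hom phi"
    and q: "\<And>\<beta>. q \<beta> \<in> polys_in n" and F: "finite F" "F \<subseteq> Bs" "\<beta> \<in> F"
    and ev: "eval_mpoly (f \<circ> (\<lambda>i. phi (\<chi> (mvar i))))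
               (\<Sum>\<beta>\<in>F. Poly_Mapping.map f (q \<beta>) * Poly_Mapping.single 0 \<beta>)
             \<in> ideal_gen_in UNIV (f ` {r. \<chi> (Poly_Mapping.single 0 r) = 0})"
  shows "\<chi> (q \<beta>) = 0"
proof -
  let ?z = "\<lambda>i. phi (\<chi> (mvar i))"
  let ?m = "{r. \<chi> (Poly_Mapping.single 0 r) = 0}"
  have "maximal_ideal_in UNIV ?m"
    by (rule maximal_ideal_kernel[OF is_ring_hom_on_constants[OF \<chi>] phi]) (simp add: phic)
  then have m: "ideal_in UNIV ?m" unfolding maximal_ideal_in_def by blast
  have "coord (eval_mpoly (f \<circ> ?z) (\<Sum>\<beta>\<in>F. Poly_Mapping.map f (q \<beta>) * Poly_Mapping.single 0 \<beta>)) \<beta>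
        = eval_mpoly ?z (q \<beta>)"
    using coord_combination[OF F] by (simp add: eval_mpoly_basis_sum)
  then have "eval_mpoly ?z (q \<beta>) \<in> ?m" using coord_in_ideal_of_extension[OF m ev, of \<beta>] by simp
  then show ?thesis using hom_eq_at_evaluation_point[OF \<chi> phic q] by simp
qed

lemma extension_of_prime_mult_closed:
  fixes phi :: "'k::field \<Rightarrow> 'r"
  assumes alg: "alg_closed_field TYPE('k)" and phi: "is_ring_hom phi"
    and G: "finite G" "gen_subring (range phi \<union> G) = UNIV"
    and dom: "\<And>m. maximal_ideal_in (UNIV::'r set) m \<Longrightarrow> quotient_is_domain (UNIV::'s set) (ideal_gen_in UNIV (f ` m))"
    and P: "prime_ideal_in (polys_in n) P"
    and ab: "a \<in> polys_in n" "b \<in> polys_in n" "a * b \<in> ideal_gen_in (polys_in n) (Poly_Mapping.map f ` P)"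
  shows "a \<in> ideal_gen_in (polys_in n) (Poly_Mapping.map f ` P) \<or> b \<in> ideal_gen_in (polys_in n) (Poly_Mapping.map f ` P)"
proof (rule ccontr)
  let ?Q = "ideal_gen_in (polys_in n) (Poly_Mapping.map f ` P)"
  assume nab: "\<not> (a \<in> ?Q \<or> b \<in> ?Q)"
  have PA: "P \<subseteq> polys_in n" using P unfolding prime_ideal_in_def ideal_in_def by auto
  obtain Fa qa \<beta>1 where Fa: "finite Fa" "Fa \<subseteq> Bs" "\<And>\<beta>. qa \<beta> \<in> polys_in n"
    "a = (\<Sum>\<beta>\<in>Fa. Poly_Mapping.map f (qa \<beta>) * Poly_Mapping.single 0 \<beta>)"
    and \<beta>1: "\<beta>1 \<in> Fa" "qa \<beta>1 \<notin> P"
    using coordinate_outside_if_not_in_extension[OF PA ab(1)] nab by blast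
  obtain Fb qb \<beta>2 where Fb: "finite Fb" "Fb \<subseteq> Bs" "\<And>\<beta>. qb \<beta> \<in> polys_in n"
    "b = (\<Sum>\<beta>\<in>Fb. Poly_Mapping.map f (qb \<beta>) * Poly_Mapping.single 0 \<beta>)"
    and \<beta>2: "\<beta>2 \<in> Fb" "qb \<beta>2 \<notin> P"
    using coordinate_outside_if_not_in_extension[OF PA ab(2)] nab by blast
  have s: "is_subring (polys_in n :: ((nat \<Rightarrow>\<^sub>0 nat) \<Rightarrow>\<^sub>0 'r) set)" by (rule is_subring_polys_in)
  have "qa \<beta>1 * qb \<beta>2 \<in> polys_in n" using Fa(3) Fb(3) s by (simp add: subringD)
  moreover have "qa \<beta>1 * qb \<beta>2 \<notin> P" using prime_idealD(4)[OF P s Fa(3) Fb(3) \<beta>1(2) \<beta>2(2)] .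
  ultimately obtain \<chi> where \<chi>: "hom_on (polys_in n) \<chi>" "\<And>c. \<chi> (Poly_Mapping.single 0 (phi c)) = c"
    "\<And>x. x \<in> P \<Longrightarrow> \<chi> x = 0" "\<chi> (qa \<beta>1 * qb \<beta>2) \<noteq> 0"
    using separating_point_polys_in[OF alg phi G P] by blast
  let ?z = "\<lambda>i. phi (\<chi> (mvar i))"
  let ?m = "{r. \<chi> (Poly_Mapping.single 0 r) = 0}"
  have "eval_mpoly (f \<circ> ?z) a * eval_mpoly (f \<circ> ?z) b \<in> ideal_gen_in UNIV (f ` ?m)"
    using eval_extension_in_extended_kernel[OF \<chi>(1,2) PA \<chi>(3) ab(3)] by (simp add: eval_mpoly_mult)
  moreover have "quotient_is_domain UNIV (ideal_gen_in UNIV (f ` ?m))"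
    by (rule dom, rule maximal_ideal_kernel[OF is_ring_hom_on_constants[OF \<chi>(1)] phi]) (simp add: \<chi>(2))
  ultimately consider "eval_mpoly (f \<circ> ?z) a \<in> ideal_gen_in UNIV (f ` ?m)"
    | "eval_mpoly (f \<circ> ?z) b \<in> ideal_gen_in UNIV (f ` ?m)"
    unfolding quotient_is_domain_def by blast
  then have "\<chi> (qa \<beta>1) = 0 \<or> \<chi> (qb \<beta>2) = 0"
  proof cases
    case 1
    then show ?thesis unfolding Fa(4)
      using coeff_vanishes_if_eval_in_extended_kernel[where q = qa, OF \<chi>(1,2) phi Fa(3) Fa(1,2) \<beta>1(1)] by blast
  next
    case 2
    then show ?thesis unfolding Fb(4)
      using coeff_vanishes_if_eval_in_extended_kernel[where q = qb, OF \<chi>(1,2) phi Fb(3) Fb(1,2) \<beta>2(1)] by blast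
  qed
  moreover have "\<chi> (qa \<beta>1 * qb \<beta>2) = \<chi> (qa \<beta>1) * \<chi> (qb \<beta>2)"
    by (rule hom_onD(4)[OF \<chi>(1) s Fa(3) Fb(3)])
  ultimately show False using \<chi>(4) by auto
qed

end

theorem prime_extension_polys_in:
  fixes phi :: "'k::field \<Rightarrow> 'r::comm_ring_1"
    and f :: "'r \<Rightarrow> 's::comm_ring_1"
  assumes alg: "alg_closed_field TYPE('k)"
    and phi: "is_ring_hom phi"
    and fg: "finitely_generated_algebra phi"
    and f: "is_ring_hom f"
    and free: "free_module_via f"
    and dom: "\<And>m. maximal_ideal_in (UNIV::'r set) m \<Longrightarrow> quotient_is_domain (UNIV::'s set) (ideal_gen_in UNIV (f ` m))"
  shows "prime_extension_property (polys_in n) (polys_in n) (Poly_Mapping.map f)"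
  unfolding prime_extension_property_def
proof (intro allI impI)
  fix P :: "((nat \<Rightarrow>\<^sub>0 nat) \<Rightarrow>\<^sub>0 'r) set"
  assume P: "prime_ideal_in (polys_in n) P"
  let ?Q = "ideal_gen_in (polys_in n) (Poly_Mapping.map f ` P)"
  obtain G where G: "finite G" "gen_subring (range phi \<union> G) = UNIV"
    using fg unfolding finitely_generated_algebra_def by blast
  obtain Bs where "\<And>s. \<exists>!c. basis_repr f Bs c s"
    using free unfolding free_module_via_def basis_repr_def by blast
  then interpret free_module f Bs using f by unfold_locales
  have "Poly_Mapping.map f ` P \<subseteq> polys_in n"
    using P map_polys_in unfolding prime_ideal_in_def ideal_in_def by blast
  then have "ideal_in (polys_in n) ?Q" by (rule ideal_gen_ideal[OF is_subring_polys_in])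
  moreover have "\<forall>a\<in>polys_in n. \<forall>b\<in>polys_in n. a * b \<in> ?Q \<longrightarrow> a \<in> ?Q \<or> b \<in> ?Q"
    using extension_of_prime_mult_closed[OF alg phi G dom P] by blast
  ultimately show "prime_ideal_in (polys_in n) ?Q \<or> ?Q = polys_in n"
    unfolding prime_ideal_in_def by blast
qed

theorem corollary5p11:
  fixes phi :: "'k::field \<Rightarrow> 'r::comm_ring_1"
    and f :: "'r \<Rightarrow> 's::comm_ring_1"
  assumes "alg_closed_field TYPE('k)"
    and "is_ring_hom phi"
    and "finitely_generated_algebra phi"
    and "is_ring_hom f"
    and "(1::'s) \<noteq> 0"
    and "free_module_via f"
    and "\<And>m. maximal_ideal_in (UNIV::'r set) m \<Longrightarrow> quotient_is_domain (UNIV::'s set) (ideal_gen_in UNIV (f ` m))"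
  shows "stable_prime_extension_property f"
  unfolding stable_prime_extension_property_def
  using prime_extension_polys_in[OF assms(1-4) assms(6) assms(7)] by blast

end
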